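(* The equational theory of $\mathbf{W}$ is decidable if, and only if, there exists an algorithm that decides, for any basic terms $t_1,\dots,t_n$, whether $\mathbf{W}\models 1\le t_1\vee\cdots\vee t_n$.
   Context: Let $\omega^+=\omega\cup\{\omega\}$. A time warp is a join-preserving map $\omega^+\to\omega^+$; $W$ is the set of time warps ordered pointwise; $p(m)=\bigvee\{k\in\omega\mid k<m\}$; $f\backslash g$ is the largest time warp $h$ with $f\circ h\le g$. $\mathbf{W}=\langle W,\wedge,\vee,\circ,{}^\star,\mathrm{id}\rangle$ with pointwise meet/join, composition, $f^\star:=f\backslash p$, identity. Terms are built from a countably infinite set of variables using $\wedge,\vee,\cdot,{}',1$, interpreted as $\wedge,\vee,\circ,{}^\star,\mathrm{id}$. A basic term is one built from variables using only $\cdot$, ${}'$, $1$. $\mathbf{W}\models s\le t$ means the value of $s$ is pointwise below that of $t$ under every assignment of time warps to the variables. *)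

theory Defs
  imports Main "HOL-Library.Extended_Nat" "HOL-Library.Nat_Bijection"
begin

text \<open>omega^+ = omega \<union> {omega} is rendered as the complete lattice enat,
  with \<infinity> playing the role of omega.\<close>

definition time_warp :: "(enat \<Rightarrow> enat) \<Rightarrow> bool" where
  "time_warp f \<longleftrightarrow> (\<forall>X :: enat set. f (Sup X) = Sup (f ` X))"

definition pw :: "enat \<Rightarrow> enat" where
  "pw m = Sup {of_nat k | k :: nat. of_nat k < m}"

definition tw_res :: "(enat \<Rightarrow> enat) \<Rightarrow> (enat \<Rightarrow> enat) \<Rightarrow> (enat \<Rightarrow> enat)" where
  "tw_res f g = (GREATEST h. time_warp h \<and> f \<circ> h \<le> g)"

definition tw_star :: "(enat \<Rightarrow> enat) \<Rightarrow> (enat \<Rightarrow> enat)" where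
  "tw_star f = tw_res f pw"

datatype trm = Var nat | Meet trm trm | Join trm trm | Dot trm trm | Prime trm | One

primrec eval :: "(nat \<Rightarrow> enat \<Rightarrow> enat) \<Rightarrow> trm \<Rightarrow> enat \<Rightarrow> enat" where
  "eval \<sigma> (Var i) = \<sigma> i"
| "eval \<sigma> (Meet s t) = inf (eval \<sigma> s) (eval \<sigma> t)"
| "eval \<sigma> (Join s t) = sup (eval \<sigma> s) (eval \<sigma> t)"
| "eval \<sigma> (Dot s t) = eval \<sigma> s \<circ> eval \<sigma> t"
| "eval \<sigma> (Prime s) = tw_star (eval \<sigma> s)"
| "eval \<sigma> One = id"

inductive basic :: "trm \<Rightarrow> bool" where
  "basic (Var i)"
| "basic s \<Longrightarrow> basic t \<Longrightarrow> basic (Dot s t)"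
| "basic s \<Longrightarrow> basic (Prime s)"
| "basic One"

definition W_leq :: "trm \<Rightarrow> trm \<Rightarrow> bool" where
  "W_leq s t \<longleftrightarrow> (\<forall>\<sigma>. (\<forall>i. time_warp (\<sigma> i)) \<longrightarrow> (\<forall>x. eval \<sigma> s x \<le> eval \<sigma> t x))"

definition W_eq :: "trm \<Rightarrow> trm \<Rightarrow> bool" where
  "W_eq s t \<longleftrightarrow> (\<forall>\<sigma>. (\<forall>i. time_warp (\<sigma> i)) \<longrightarrow> eval \<sigma> s = eval \<sigma> t)"

fun joins :: "trm list \<Rightarrow> trm" where
  "joins [] = One"
| "joins [t] = t"
| "joins (t # ts) = Join t (joins ts)"

inductive total_rec :: "nat \<Rightarrow> (nat list \<Rightarrow> nat) \<Rightarrow> bool" where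
  zero: "total_rec n (\<lambda>_. 0)"
| succ: "total_rec 1 (\<lambda>xs. Suc (hd xs))"
| proj: "i < n \<Longrightarrow> total_rec n (\<lambda>xs. xs ! i)"
| comp: "total_rec m g \<Longrightarrow> length fs = m \<Longrightarrow> (\<forall>f \<in> set fs. total_rec n f) \<Longrightarrow>
          total_rec n (\<lambda>xs. g (map (\<lambda>f. f xs) fs))"
| prim: "total_rec n g \<Longrightarrow> total_rec (n + 2) h \<Longrightarrow>
          total_rec (n + 1) (\<lambda>xs. rec_nat (g (tl xs)) (\<lambda>k r. h (k # r # tl xs)) (hd xs))"
| mu: "total_rec (n + 1) g \<Longrightarrow> (\<forall>ys. length ys = n \<longrightarrow> (\<exists>y. g (y # ys) = 0)) \<Longrightarrow>
          total_rec n (\<lambda>ys. LEAST y. g (y # ys) = 0)"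

definition decidable_set :: "nat set \<Rightarrow> bool" where
  "decidable_set S \<longleftrightarrow> (\<exists>f. total_rec 1 f \<and> (\<forall>x. x \<in> S \<longleftrightarrow> f [x] = 0))"

primrec code :: "trm \<Rightarrow> nat" where
  "code (Var i) = prod_encode (0, i)"
| "code (Meet s t) = prod_encode (1, prod_encode (code s, code t))"
| "code (Join s t) = prod_encode (2, prod_encode (code s, code t))"
| "code (Dot s t) = prod_encode (3, prod_encode (code s, code t))"
| "code (Prime s) = prod_encode (4, code s)"
| "code One = prod_encode (5, 0)"

definition equational_theory_codes :: "nat set" where
  "equational_theory_codes = {prod_encode (code s, code t) | s t. W_eq s t}"

definition basic_join_codes :: "nat set" where
  "basic_join_codes = {list_encode (map code ts) | ts.
      ts \<noteq> [] \<and> (\<forall>t \<in> set ts. basic t) \<and> W_leq One (joins ts)}"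

end

theory Submission
  imports Defs
begin

text \<open>
  Composition distributes over finite joins and meets of time warps, and \<open>\<star>\<close> is an involutive
  anti-automorphism of the lattice, so every term equals in \<open>\<W>\<close> both a join of meets and a
  meet of joins of basic terms.  Hence \<open>s \<le> t\<close> amounts to finitely many inequalities
  \<open>\<Sqinter>a \<le> \<Squnion>c\<close> between a meet and a join of basic terms, and \<open>f \<le> g \<longleftrightarrow> 1 \<le> (f \<cdot> g\<star>)\<star>\<close>
  turns each of them into \<open>1 \<le> \<Squnion>{(u \<cdot> v\<star>)\<star> | u \<in> a, v \<in> c}\<close>.  Conversely \<open>1 \<le> t\<close> is the
  equation \<open>1 \<and> t = 1\<close>.  Both translations are computable on G\<ouml>del codes.
\<close>

section \<open>Closure properties of the total recursive functions\<close>

definition computable :: "nat \<Rightarrow> (nat list \<Rightarrow> nat) \<Rightarrow> bool" where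
  "computable n f \<longleftrightarrow> (\<exists>g. total_rec n g \<and> (\<forall>xs. length xs = n \<longrightarrow> g xs = f xs))"

lemma computable_cong:
  "computable n f \<Longrightarrow> (\<And>xs. length xs = n \<Longrightarrow> f xs = g xs) \<Longrightarrow> computable n g"
  unfolding computable_def by metis

lemma total_rec_computable: "total_rec n f \<Longrightarrow> computable n f"
  unfolding computable_def by blast

lemma computable_zero: "computable n (\<lambda>_. 0)"
  by (rule total_rec_computable) (rule total_rec.zero)

lemma computable_succ: "computable 1 (\<lambda>xs. Suc (hd xs))"
  by (rule total_rec_computable) (rule total_rec.succ)

lemma computable_proj: "i < n \<Longrightarrow> computable n (\<lambda>xs. xs ! i)"
  by (rule total_rec_computable) (rule total_rec.proj)

lemma computable_comp:
  assumes g: "computable m g" and len: "length fs = m" and fs: "\<forall>f \<in> set fs. computable n f"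
  shows "computable n (\<lambda>xs. g (map (\<lambda>f. f xs) fs))"
proof -
  obtain g' where g': "total_rec m g'" "\<forall>xs. length xs = m \<longrightarrow> g' xs = g xs"
    using g unfolding computable_def by auto
  from fs have "\<forall>f \<in> set fs. \<exists>g. total_rec n g \<and> (\<forall>xs. length xs = n \<longrightarrow> g xs = f xs)"
    unfolding computable_def .
  then obtain G where G: "\<forall>f \<in> set fs. total_rec n (G f) \<and> (\<forall>xs. length xs = n \<longrightarrow> G f xs = f xs)"
    by (rule bchoice[THEN exE])
  have "total_rec n (\<lambda>xs. g' (map (\<lambda>f. f xs) (map G fs)))"
    by (rule total_rec.comp[OF g'(1)]) (use G len in auto)
  moreover have "g' (map (\<lambda>f. f xs) (map G fs)) = g (map (\<lambda>f. f xs) fs)" if "length xs = n" for xs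
  proof -
    have m: "map (\<lambda>f. f xs) (map G fs) = map (\<lambda>f. f xs) fs" using G that by simp
    have "length (map (\<lambda>f. f xs) fs) = m" using len by simp
    then show ?thesis unfolding m using g'(2) by blast
  qed
  ultimately show ?thesis
    unfolding computable_def by blast
qed

lemma rec_nat_cong:
  assumes "\<And>k r. h k r = h' k r"
  shows "rec_nat a h n = rec_nat a h' n"
  by (induction n) (auto simp: assms)

lemma computable_prim:
  assumes "computable n g" "computable (n + 2) h"
  shows "computable (n + 1) (\<lambda>xs. rec_nat (g (tl xs)) (\<lambda>k r. h (k # r # tl xs)) (hd xs))"
proof -
  obtain g' where g': "total_rec n g'" "\<forall>xs. length xs = n \<longrightarrow> g' xs = g xs"
    using assms(1) unfolding computable_def by auto
  obtain h' where h': "total_rec (n + 2) h'" "\<forall>xs. length xs = n + 2 \<longrightarrow> h' xs = h xs"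
    using assms(2) unfolding computable_def by auto
  have "total_rec (n + 1) (\<lambda>xs. rec_nat (g' (tl xs)) (\<lambda>k r. h' (k # r # tl xs)) (hd xs))"
    by (rule total_rec.prim[OF g'(1) h'(1)])
  moreover have "\<forall>xs. length xs = n + 1 \<longrightarrow>
      rec_nat (g' (tl xs)) (\<lambda>k r. h' (k # r # tl xs)) (hd xs) =
      rec_nat (g (tl xs)) (\<lambda>k r. h (k # r # tl xs)) (hd xs)"
    using g'(2) h'(2) by (auto intro: rec_nat_cong)
  ultimately show ?thesis unfolding computable_def by blast
qed

lemma computable_mu:
  assumes "computable (n + 1) g" "\<forall>ys. length ys = n \<longrightarrow> (\<exists>y. g (y # ys) = 0)"
  shows "computable n (\<lambda>ys. LEAST y. g (y # ys) = 0)"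
proof -
  obtain g' where g': "total_rec (n + 1) g'" "\<forall>xs. length xs = n + 1 \<longrightarrow> g' xs = g xs"
    using assms(1) unfolding computable_def by auto
  have eq: "\<And>ys y. length ys = n \<Longrightarrow> g' (y # ys) = g (y # ys)" using g'(2) by auto
  have "total_rec n (\<lambda>ys. LEAST y. g' (y # ys) = 0)"
    by (rule total_rec.mu[OF g'(1)]) (use assms(2) eq in auto)
  moreover have "\<forall>ys. length ys = n \<longrightarrow> (LEAST y. g' (y # ys) = 0) = (LEAST y. g (y # ys) = 0)"
    using eq by auto
  ultimately show ?thesis unfolding computable_def by blast
qed

lemma computable_comp1:
  assumes "computable 1 g" "computable n f"
  shows "computable n (\<lambda>xs. g [f xs])"
  using computable_comp[OF assms(1), of "[f]" n] assms(2) by simp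

lemma computable_comp2:
  assumes "computable 2 g" "computable n f1" "computable n f2"
  shows "computable n (\<lambda>xs. g [f1 xs, f2 xs])"
  using computable_comp[OF assms(1), of "[f1, f2]" n] assms(2,3) by simp

lemma computable_const: "computable n (\<lambda>_. k)"
proof (induction k)
  case 0
  then show ?case by (rule computable_zero)
next
  case (Suc k)
  show ?case
    using computable_comp1[OF computable_succ Suc] by simp
qed

lemma computable_rec_nat:
  assumes c: "computable n c" and i: "computable n i" and h: "computable (n + 2) h"
  shows "computable n (\<lambda>ys. rec_nat (i ys) (\<lambda>k r. h (k # r # ys)) (c ys))"
proof -
  let ?R = "\<lambda>xs. rec_nat (i (tl xs)) (\<lambda>k r. h (k # r # tl xs)) (hd xs)"
  let ?fs = "c # map (\<lambda>j ys. ys ! j) [0..<n]"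
  have "computable n (\<lambda>ys. ?R (map (\<lambda>f. f ys) ?fs))"
    by (rule computable_comp[OF computable_prim[OF i h]]) (auto intro: computable_proj c)
  then show ?thesis
  proof (rule computable_cong)
    fix ys :: "nat list" assume "length ys = n"
    then have "map (\<lambda>j. ys ! j) [0..<n] = ys" using map_nth[of ys] by simp
    then have "map (\<lambda>f. f ys) ?fs = c ys # ys" by (simp add: comp_def)
    then show "?R (map (\<lambda>f. f ys) ?fs) = rec_nat (i ys) (\<lambda>k r. h (k # r # ys)) (c ys)"
      by simp
  qed
qed

lemma rec_nat_add: "rec_nat a (\<lambda>k r. Suc r) b = b + (a::nat)"
  by (induction b) auto

lemma computable_add_proj: "computable 2 (\<lambda>xs. xs ! 0 + xs ! 1)"
proof -
  have h: "computable (2 + 2) (\<lambda>zs. Suc (zs ! 1))"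
    using computable_comp1[OF computable_succ computable_proj[of 1 "2+2"]] by simp
  have "computable 2 (\<lambda>ys. rec_nat (ys ! 1) (\<lambda>k r. (\<lambda>zs. Suc (zs ! 1)) (k # r # ys)) (ys ! 0))"
    by (rule computable_rec_nat[OF computable_proj computable_proj h]) auto
  then show ?thesis by (rule computable_cong) (simp add: rec_nat_add)
qed

lemma computable_add: "computable n f \<Longrightarrow> computable n g \<Longrightarrow> computable n (\<lambda>xs. f xs + g xs)"
  using computable_comp2[OF computable_add_proj] by simp

lemma computable_Suc: "computable n f \<Longrightarrow> computable n (\<lambda>xs. Suc (f xs))"
  using computable_comp1[OF computable_succ] by simp

lemma rec_nat_pred: "rec_nat 0 (\<lambda>k r. k) m = m - (1::nat)"
  by (cases m) auto

lemma computable_pred_proj: "computable 1 (\<lambda>xs. xs ! 0 - 1)"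
proof -
  have "computable 1 (\<lambda>ys. rec_nat ((\<lambda>_. 0) ys) (\<lambda>k r. (\<lambda>zs. zs ! 0) (k # r # ys)) (ys ! 0))"
    by (rule computable_rec_nat[OF computable_proj computable_zero computable_proj]) auto
  then show ?thesis by (rule computable_cong) (simp add: rec_nat_pred)
qed

lemma computable_pred: "computable n f \<Longrightarrow> computable n (\<lambda>xs. f xs - 1)"
  using computable_comp1[OF computable_pred_proj] by simp

lemma rec_nat_sub: "rec_nat a (\<lambda>k r. r - Suc 0) b = (a::nat) - b"
  by (induction b) auto

lemma computable_diff_proj: "computable 2 (\<lambda>xs. xs ! 0 - xs ! 1)"
proof -
  have h: "computable (2 + 2) (\<lambda>zs. zs ! 1 - 1)"
    by (rule computable_pred[OF computable_proj]) simp
  have "computable 2 (\<lambda>ys. rec_nat (ys ! 0) (\<lambda>k r. (\<lambda>zs. zs ! 1 - 1) (k # r # ys)) (ys ! 1))"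
    by (rule computable_rec_nat[OF computable_proj computable_proj h]) auto
  then show ?thesis by (rule computable_cong) (simp add: rec_nat_sub)
qed

lemma computable_diff: "computable n f \<Longrightarrow> computable n g \<Longrightarrow> computable n (\<lambda>xs. f xs - g xs)"
  using computable_comp2[OF computable_diff_proj] by simp

lemma rec_nat_mult: "rec_nat 0 (\<lambda>k r. r + y) x = x * (y::nat)"
  by (induction x) auto

lemma computable_mult_proj: "computable 2 (\<lambda>xs. xs ! 0 * xs ! 1)"
proof -
  have h: "computable (2 + 2) (\<lambda>zs. zs ! 1 + zs ! 3)"
    by (rule computable_add[OF computable_proj computable_proj]) auto
  have "computable 2
      (\<lambda>ys. rec_nat ((\<lambda>_. 0) ys) (\<lambda>k r. (\<lambda>zs. zs ! 1 + zs ! 3) (k # r # ys)) (ys ! 0))"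
    by (rule computable_rec_nat[OF computable_proj computable_zero h]) auto
  then show ?thesis by (rule computable_cong) (simp add: rec_nat_mult)
qed

lemma computable_mult: "computable n f \<Longrightarrow> computable n g \<Longrightarrow> computable n (\<lambda>xs. f xs * g xs)"
  using computable_comp2[OF computable_mult_proj] by simp

lemma rec_nat_triangle: "rec_nat 0 (\<lambda>k r. Suc (r + k)) x = triangle x"
  by (induction x) auto

lemma computable_triangle_proj: "computable 1 (\<lambda>xs. triangle (xs ! 0))"
proof -
  have h: "computable (1 + 2) (\<lambda>zs. zs ! 1 + Suc (zs ! 0))"
    by (rule computable_add[OF computable_proj computable_Suc[OF computable_proj]]) auto
  have "computable 1
      (\<lambda>ys. rec_nat ((\<lambda>_. 0) ys) (\<lambda>k r. (\<lambda>zs. zs ! 1 + Suc (zs ! 0)) (k # r # ys)) (ys ! 0))"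
    by (rule computable_rec_nat[OF computable_proj computable_zero h]) auto
  then show ?thesis by (rule computable_cong) (simp add: rec_nat_triangle)
qed

lemma computable_triangle: "computable n f \<Longrightarrow> computable n (\<lambda>xs. triangle (f xs))"
  using computable_comp1[OF computable_triangle_proj] by simp

lemma computable_prod_encode:
  "computable n f \<Longrightarrow> computable n g \<Longrightarrow> computable n (\<lambda>xs. prod_encode (f xs, g xs))"
  unfolding prod_encode_def by (simp add: computable_add computable_triangle)

lemma triangle_mono: "a \<le> b \<Longrightarrow> triangle a \<le> triangle b"
  unfolding triangle_def by (intro div_le_mono mult_le_mono) auto

text \<open>The index \<open>a + b\<close> of the diagonal through \<open>prod_decode n = (a, b)\<close>, i.e. the least \<open>k\<close>
  with \<open>n < triangle (k + 1)\<close>, is found by minimisation; both components are then arithmetic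
  in \<open>n\<close> and \<open>k\<close>.\<close>

definition diagonal_index :: "nat \<Rightarrow> nat" where
  "diagonal_index n = (LEAST k. Suc n - triangle (Suc k) = 0)"

lemma diagonal_index_eq: "prod_decode n = (a, b) \<Longrightarrow> diagonal_index n = a + b"
proof -
  assume d: "prod_decode n = (a, b)"
  have "n = prod_encode (a, b)" using d prod_decode_inverse by metis
  then have n: "n = triangle (a + b) + a"
    by (simp add: prod_encode_def)
  show ?thesis unfolding diagonal_index_def
  proof (rule Least_equality)
    show "Suc n - triangle (Suc (a + b)) = 0" using n by simp
  next
    fix k assume k: "Suc n - triangle (Suc k) = 0"
    show "a + b \<le> k"
    proof (rule ccontr)
      assume "\<not> a + b \<le> k"
      then have "triangle (Suc k) \<le> triangle (a + b)" by (intro triangle_mono) auto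
      then show False using k n by simp
    qed
  qed
qed

lemma fst_prod_decode_eq: "fst (prod_decode n) = n - triangle (diagonal_index n)"
proof (cases "prod_decode n")
  case (Pair a b)
  have "n = prod_encode (a, b)" using Pair prod_decode_inverse by metis
  then have n: "n = triangle (a + b) + a"
    by (simp add: prod_encode_def)
  show ?thesis using Pair diagonal_index_eq[OF Pair] n by simp
qed

lemma snd_prod_decode_eq: "snd (prod_decode n) = diagonal_index n - fst (prod_decode n)"
  by (cases "prod_decode n") (simp add: diagonal_index_eq)

lemma computable_diagonal_index: "computable 1 (\<lambda>xs. diagonal_index (xs ! 0))"
proof -
  have g: "computable (1 + 1) (\<lambda>zs. Suc (zs ! 1) - triangle (Suc (zs ! 0)))"
    by (rule computable_diff[OF computable_Suc computable_triangle[OF computable_Suc]])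
      (auto intro: computable_proj)
  have "computable 1 (\<lambda>ys. LEAST y. (\<lambda>zs. Suc (zs ! 1) - triangle (Suc (zs ! 0))) (y # ys) = 0)"
  proof (rule computable_mu[OF g], intro allI impI)
    fix ys :: "nat list" assume "length ys = 1"
    have "Suc (ys ! 0) - triangle (Suc (ys ! 0)) = 0" by simp
    then show "\<exists>y. (\<lambda>zs. Suc (zs ! 1) - triangle (Suc (zs ! 0))) (y # ys) = 0"
      by (intro exI[of _ "ys ! 0"]) simp
  qed
  then show ?thesis by (rule computable_cong) (simp add: diagonal_index_def)
qed

lemma computable_fst_prod_decode: "computable 1 (\<lambda>xs. fst (prod_decode (xs ! 0)))"
proof -
  have "computable 1 (\<lambda>xs. xs ! 0 - triangle (diagonal_index (xs ! 0)))"
    by (rule computable_diff[OF computable_proj computable_triangle[OF computable_diagonal_index]])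
      auto
  then show ?thesis by (rule computable_cong) (simp add: fst_prod_decode_eq)
qed

lemma computable_snd_prod_decode: "computable 1 (\<lambda>xs. snd (prod_decode (xs ! 0)))"
proof -
  have "computable 1 (\<lambda>xs. diagonal_index (xs ! 0) - fst (prod_decode (xs ! 0)))"
    by (rule computable_diff[OF computable_diagonal_index computable_fst_prod_decode])
  then show ?thesis by (rule computable_cong) (simp add: snd_prod_decode_eq)
qed

text \<open>From here on, functions of several arguments are unary functions of the
  \<^const>\<open>prod_encode\<close>-tuple of their arguments.\<close>

definition computable1 :: "(nat \<Rightarrow> nat) \<Rightarrow> bool" where
  "computable1 f \<longleftrightarrow> computable 1 (\<lambda>xs. f (hd xs))"

lemma computable1I: "computable 1 (\<lambda>xs. f (xs ! 0)) \<Longrightarrow> computable1 f"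
  unfolding computable1_def by (erule computable_cong) (auto simp: hd_conv_nth length_Suc_conv)

named_theorems computable1_intros

lemma computable1_id [computable1_intros]: "computable1 (\<lambda>x. x)"
  by (rule computable1I) (rule computable_proj, simp)

lemma computable1_const [computable1_intros]: "computable1 (\<lambda>x. k)"
  unfolding computable1_def by (rule computable_const)

lemma computable1_Suc [computable1_intros]: "computable1 f \<Longrightarrow> computable1 (\<lambda>x. Suc (f x))"
  unfolding computable1_def by (rule computable_Suc)

lemma computable1_add [computable1_intros]:
  "computable1 f \<Longrightarrow> computable1 g \<Longrightarrow> computable1 (\<lambda>x. f x + g x)"
  unfolding computable1_def by (rule computable_add)

lemma computable1_diff [computable1_intros]:
  "computable1 f \<Longrightarrow> computable1 g \<Longrightarrow> computable1 (\<lambda>x. f x - g x)"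
  unfolding computable1_def by (rule computable_diff)

lemma computable1_mult [computable1_intros]:
  "computable1 f \<Longrightarrow> computable1 g \<Longrightarrow> computable1 (\<lambda>x. f x * g x)"
  unfolding computable1_def by (rule computable_mult)

lemma computable1_prod_encode [computable1_intros]:
  "computable1 f \<Longrightarrow> computable1 g \<Longrightarrow> computable1 (\<lambda>x. prod_encode (f x, g x))"
  unfolding computable1_def by (rule computable_prod_encode)

lemma computable1_comp: "computable1 f \<Longrightarrow> computable1 g \<Longrightarrow> computable1 (\<lambda>x. f (g x))"
  unfolding computable1_def using computable_comp1[of "\<lambda>xs. f (hd xs)" 1 "\<lambda>xs. g (hd xs)"] by simp

lemma computable1_fst: "computable1 (\<lambda>x. fst (prod_decode x))"
  by (rule computable1I) (rule computable_fst_prod_decode)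

lemma computable1_snd: "computable1 (\<lambda>x. snd (prod_decode x))"
  by (rule computable1I) (rule computable_snd_prod_decode)

lemma computable1_fst_comp [computable1_intros]:
  "computable1 f \<Longrightarrow> computable1 (\<lambda>x. fst (prod_decode (f x)))"
  using computable1_comp[OF computable1_fst] by simp

lemma computable1_snd_comp [computable1_intros]:
  "computable1 f \<Longrightarrow> computable1 (\<lambda>x. snd (prod_decode (f x)))"
  using computable1_comp[OF computable1_snd] by simp

lemma computable1_if_eq [computable1_intros]:
  assumes "computable1 f" "computable1 g" "computable1 a" "computable1 b"
  shows "computable1 (\<lambda>x. if f x = g x then a x else b x)"
proof -
  let ?d = "\<lambda>x. (f x - g x) + (g x - f x)"
  have "computable1 (\<lambda>x. a x * (1 - ?d x) + b x * (1 - (1 - ?d x)))"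
    by (intro computable1_intros assms)
  moreover have "a x * (1 - ?d x) + b x * (1 - (1 - ?d x)) = (if f x = g x then a x else b x)" for x
    by auto
  ultimately show ?thesis by simp
qed

lemma rec_nat_funpow: "rec_nat a (\<lambda>k r. F r) n = (F ^^ n) a"
  by (induction n) auto

lemma computable1_funpow:
  assumes c: "computable1 c" and i: "computable1 i" and s: "computable1 s"
  shows "computable1 (\<lambda>x. ((\<lambda>z. s (prod_encode (x, z))) ^^ c x) (i x))"
proof -
  have s': "computable 1 (\<lambda>xs. s (hd xs))" using s unfolding computable1_def .
  have h: "computable (1 + 2) (\<lambda>zs. s (prod_encode (zs ! 2, zs ! 1)))"
    using computable_comp1[OF s' computable_prod_encode[OF computable_proj computable_proj,
        of 2 "1 + 2" 1]]
    by simp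
  have "computable 1 (\<lambda>ys. rec_nat (i (hd ys))
      (\<lambda>k r. (\<lambda>zs. s (prod_encode (zs ! 2, zs ! 1))) (k # r # ys)) (c (hd ys)))"
    by (rule computable_rec_nat[OF c[unfolded computable1_def] i[unfolded computable1_def] h])
  then show ?thesis unfolding computable1_def
    by (rule computable_cong) (auto simp: rec_nat_funpow length_Suc_conv)
qed

lemma computable1_cong: "computable1 f \<Longrightarrow> (\<And>x. f x = g x) \<Longrightarrow> computable1 g"
  by (metis ext)


section \<open>Lists coded as natural numbers\<close>

definition hd_code :: "nat \<Rightarrow> nat" where "hd_code n = fst (prod_decode (n - 1))"
definition tl_code :: "nat \<Rightarrow> nat" where "tl_code n = snd (prod_decode (n - 1))"

lemma hd_code_Suc [simp]: "hd_code (Suc (prod_encode (y, l))) = y"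
  by (simp add: hd_code_def)

lemma tl_code_Suc [simp]: "tl_code (Suc (prod_encode (y, l))) = l"
  by (simp add: tl_code_def)

lemma computable1_hd_code [computable1_intros]: "computable1 f \<Longrightarrow> computable1 (\<lambda>x. hd_code (f x))"
  unfolding hd_code_def by (intro computable1_intros)

lemma computable1_tl_code [computable1_intros]: "computable1 f \<Longrightarrow> computable1 (\<lambda>x. tl_code (f x))"
  unfolding tl_code_def by (intro computable1_intros)

lemma length_le_list_encode: "length ys \<le> list_encode ys"
proof (induction ys)
  case Nil then show ?case by simp
next
  case (Cons y ys)
  have "list_encode ys \<le> prod_encode (y, list_encode ys)" by (rule le_prod_encode_2)
  then show ?case using Cons by simp
qed

lemma list_encode_eq_0_iff [simp]: "list_encode ys = 0 \<longleftrightarrow> ys = []"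
  by (cases ys) auto

text \<open>One step of a left fold, on states \<open>(rest of the list, accumulator)\<close>; the list
  code bounds the length of the list, so iterating it \<open>list_encode ys\<close> times suffices.\<close>

definition foldl_code_step :: "(nat \<Rightarrow> nat) \<Rightarrow> nat \<Rightarrow> nat \<Rightarrow> nat" where
  "foldl_code_step b x z = (let l = fst (prod_decode z); acc = snd (prod_decode z) in
     if l = 0 then z
     else prod_encode (tl_code l, b (prod_encode (x, prod_encode (hd_code l, acc)))))"

lemma funpow_foldl_code_step:
  "(foldl_code_step b x ^^ k) (prod_encode (list_encode ys, acc)) =
     prod_encode (list_encode (drop k ys),
       foldl (\<lambda>acc y. b (prod_encode (x, prod_encode (y, acc)))) acc (take k ys))"
proof (induction k)
  case 0
  then show ?case by simp
next
  case (Suc k)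
  show ?case
  proof (cases "drop k ys")
    case Nil
    then have "take k ys = ys" "drop (Suc k) ys = []" "take (Suc k) ys = ys" by auto
    then show ?thesis using Suc Nil by (simp add: foldl_code_step_def)
  next
    case (Cons y rest)
    then have k: "k < length ys" by (metis drop_all list.simps(3) not_le)
    have "ys ! k = y" using Cons k by (metis hd_drop_conv_nth list.sel(1))
    then have "drop (Suc k) ys = rest" "take (Suc k) ys = take k ys @ [y]"
      using Cons k by (simp_all add: drop_Suc drop_tl take_Suc_conv_app_nth)
    then show ?thesis using Suc Cons by (simp add: foldl_code_step_def)
  qed
qed

lemma computable1_foldl:
  assumes b: "computable1 b" and a: "computable1 a" and L: "computable1 L"
  shows "computable1
    (\<lambda>x. foldl (\<lambda>acc y. b (prod_encode (x, prod_encode (y, acc)))) (a x) (list_decode (L x)))"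
proof -
  have "computable1 (\<lambda>w. foldl_code_step b (fst (prod_decode w)) (snd (prod_decode w)))"
    unfolding foldl_code_step_def Let_def by (intro computable1_intros computable1_comp[OF b])
  from computable1_funpow[OF L computable1_prod_encode[OF L a] this]
  have "computable1 (\<lambda>x. (foldl_code_step b x ^^ L x) (prod_encode (L x, a x)))"
    by simp
  then have "computable1
      (\<lambda>x. snd (prod_decode ((foldl_code_step b x ^^ L x) (prod_encode (L x, a x)))))"
    by (rule computable1_snd_comp)
  then show ?thesis
  proof (rule computable1_cong)
    fix x
    let ?ys = "list_decode (L x)"
    have "(foldl_code_step b x ^^ L x) (prod_encode (L x, a x)) =
      prod_encode (list_encode (drop (L x) ?ys),
        foldl (\<lambda>acc y. b (prod_encode (x, prod_encode (y, acc)))) (a x) (take (L x) ?ys))"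
      using funpow_foldl_code_step[of "L x" b x ?ys "a x"] by simp
    then show "snd (prod_decode ((foldl_code_step b x ^^ L x) (prod_encode (L x, a x)))) =
        foldl (\<lambda>acc y. b (prod_encode (x, prod_encode (y, acc)))) (a x) ?ys"
      using length_le_list_encode[of ?ys] by simp
  qed
qed

lemma foldl_list_encode_Cons:
  "foldl (\<lambda>acc y. Suc (prod_encode (y, acc))) (list_encode zs) ys = list_encode (rev ys @ zs)"
proof (induction ys arbitrary: zs)
  case (Cons y ys)
  then show ?case using Cons.IH[of "y # zs"] by simp
qed simp

lemma computable1_rev [computable1_intros]:
  assumes L: "computable1 L"
  shows "computable1 (\<lambda>x. list_encode (rev (list_decode (L x))))"
proof -
  have "computable1 (\<lambda>w. Suc (snd (prod_decode w)))"
    by (intro computable1_intros)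
  from computable1_foldl[OF this computable1_const L, of 0] show ?thesis
    using foldl_list_encode_Cons[of "[]"] by simp
qed

lemma computable1_foldr:
  assumes b: "computable1 b" and a: "computable1 a" and L: "computable1 L"
  shows "computable1
    (\<lambda>x. foldr (\<lambda>y acc. b (prod_encode (x, prod_encode (y, acc)))) (list_decode (L x)) (a x))"
  using computable1_foldl[OF b a computable1_rev[OF L]] by (simp add: foldr_conv_foldl)

lemma list_encode_map_foldr:
  "list_encode (map f ys) = foldr (\<lambda>y acc. Suc (prod_encode (f y, acc))) ys 0"
  by (induction ys) auto

lemma computable1_map:
  assumes F: "computable1 F" and L: "computable1 L"
  shows "computable1 (\<lambda>x. list_encode (map (\<lambda>y. F (prod_encode (x, y))) (list_decode (L x))))"
proof -
  have "computable1 (\<lambda>w. Suc (prod_encode (F (prod_encode (fst (prod_decode w),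
      fst (prod_decode (snd (prod_decode w))))), snd (prod_decode (snd (prod_decode w))))))"
    by (intro computable1_intros computable1_comp[OF F])
  from computable1_foldr[OF this computable1_const L, of 0] show ?thesis
    by (simp add: list_encode_map_foldr)
qed

lemma list_encode_append_foldr:
  "list_encode (ys @ zs) = foldr (\<lambda>y acc. Suc (prod_encode (y, acc))) ys (list_encode zs)"
  by (induction ys) auto

lemma computable1_append [computable1_intros]:
  assumes L1: "computable1 L1" and L2: "computable1 L2"
  shows "computable1 (\<lambda>x. list_encode (list_decode (L1 x) @ list_decode (L2 x)))"
proof -
  have "computable1 (\<lambda>w. Suc (snd (prod_decode w)))"
    by (intro computable1_intros)
  from computable1_foldr[OF this L2 L1] show ?thesis
    by (simp add: list_encode_append_foldr[of _ "list_decode _", simplified])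
qed

lemma list_encode_concat_foldr:
  "list_encode (concat (map list_decode ys)) =
     foldr (\<lambda>y acc. list_encode (list_decode y @ list_decode acc)) ys 0"
proof (induction ys)
  case (Cons y ys)
  then show ?case by (simp add: Cons.IH[symmetric])
qed simp

lemma computable1_concat [computable1_intros]:
  assumes L: "computable1 L"
  shows "computable1 (\<lambda>x. list_encode (concat (map list_decode (list_decode (L x)))))"
proof -
  have "computable1 (\<lambda>w. list_encode (list_decode (fst (prod_decode (snd (prod_decode w)))) @
      list_decode (snd (prod_decode (snd (prod_decode w))))))"
    by (intro computable1_intros)
  from computable1_foldr[OF this computable1_const L, of 0] show ?thesis
    by (simp add: list_encode_concat_foldr)
qed

lemma computable1_comprehension:
  assumes F: "computable1 F" and L1: "computable1 L1" and L2: "computable1 L2"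
  shows "computable1 (\<lambda>x. list_encode (concat (map (\<lambda>y.
    map (\<lambda>z. F (prod_encode (x, prod_encode (y, z))))
    (list_decode (L2 x))) (list_decode (L1 x)))))"
proof -
  have "computable1 (\<lambda>w. F (prod_encode (fst (prod_decode (fst (prod_decode w))),
      prod_encode (snd (prod_decode (fst (prod_decode w))), snd (prod_decode w)))))"
    by (intro computable1_intros computable1_comp[OF F])
  from computable1_map[OF this computable1_comp[OF L2 computable1_fst]]
  have "computable1 (\<lambda>w. list_encode (map (\<lambda>z. F (prod_encode (fst (prod_decode w),
      prod_encode (snd (prod_decode w), z)))) (list_decode (L2 (fst (prod_decode w))))))"
    by simp
  from computable1_map[OF this L1]
  have "computable1 (\<lambda>x. list_encode (map (\<lambda>y. list_encode (map (\<lambda>z. F (prod_encode (x,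
      prod_encode (y, z)))) (list_decode (L2 x)))) (list_decode (L1 x))))"
    by simp
  from computable1_concat[OF this] show ?thesis by (simp add: comp_def)
qed

lemma computable1_sum_list:
  assumes F: "computable1 F" and L: "computable1 L"
  shows "computable1 (\<lambda>x. sum_list (map (\<lambda>y. F (prod_encode (x, y))) (list_decode (L x))))"
proof -
  have "computable1 (\<lambda>w.
      F (prod_encode (fst (prod_decode w), fst (prod_decode (snd (prod_decode w))))) +
      snd (prod_decode (snd (prod_decode w))))"
    by (intro computable1_intros computable1_comp[OF F])
  from computable1_foldr[OF this computable1_const L, of 0] show ?thesis
    by (simp add: sum_list.eq_foldr foldr_map comp_def)
qed

definition nth_code :: "nat \<Rightarrow> nat \<Rightarrow> nat" where
  "nth_code h j = hd_code ((tl_code ^^ j) h)"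

lemma tl_code_funpow: "j \<le> length ys \<Longrightarrow> (tl_code ^^ j) (list_encode ys) = list_encode (drop j ys)"
proof (induction j)
  case 0 then show ?case by simp
next
  case (Suc j)
  then have "j < length ys" by simp
  then obtain y rest where d: "drop j ys = y # rest" by (metis Cons_nth_drop_Suc)
  then have "drop (Suc j) ys = rest" by (metis drop_Suc list.sel(3) tl_drop)
  then show ?case using Suc d by simp
qed

lemma nth_code_list_encode: "j < length ys \<Longrightarrow> nth_code (list_encode ys) j = ys ! j"
proof -
  assume j: "j < length ys"
  then obtain y rest where d: "drop j ys = y # rest" by (metis Cons_nth_drop_Suc)
  have "ys ! j = y" using d j by (metis hd_drop_conv_nth list.sel(1))
  then show ?thesis using tl_code_funpow[of j ys] j d by (simp add: nth_code_def)
qed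

lemma computable1_nth_code [computable1_intros]:
  "computable1 H \<Longrightarrow> computable1 J \<Longrightarrow> computable1 (\<lambda>x. nth_code (H x) (J x))"
proof -
  assume H: "computable1 H" and J: "computable1 J"
  have "computable1 (\<lambda>w. tl_code (snd (prod_decode w)))"
    by (intro computable1_intros)
  from computable1_funpow[OF J H this] have "computable1 (\<lambda>x. (tl_code ^^ J x) (H x))"
    by simp
  then show ?thesis unfolding nth_code_def by (rule computable1_hd_code)
qed

section \<open>Course-of-values recursion\<close>

primrec cov_history :: "(nat \<Rightarrow> nat) \<Rightarrow> nat \<Rightarrow> nat list" where
  "cov_history G 0 = []"
| "cov_history G (Suc k) = G (prod_encode (k, list_encode (cov_history G k))) # cov_history G k"

definition cov_rec :: "(nat \<Rightarrow> nat) \<Rightarrow> nat \<Rightarrow> nat" where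
  "cov_rec G n = G (prod_encode (n, list_encode (cov_history G n)))"

lemma length_cov_history [simp]: "length (cov_history G n) = n"
  by (induction n) auto

lemma cov_history_nth: "m < n \<Longrightarrow> cov_history G n ! (n - Suc m) = cov_rec G m"
proof (induction n)
  case 0 then show ?case by simp
next
  case (Suc n)
  show ?case
  proof (cases "m = n")
    case True then show ?thesis by (simp add: cov_rec_def)
  next
    case False
    then have "m < n" using Suc by simp
    then have "Suc n - Suc m = Suc (n - Suc m)" by simp
    then show ?thesis using Suc.IH \<open>m < n\<close> by simp
  qed
qed

lemma funpow_cov_history:
  "((\<lambda>z. prod_encode (Suc (fst (prod_decode z)), Suc (prod_encode (G z, snd (prod_decode z)))))
    ^^ k) (prod_encode (0, 0)) = prod_encode (k, list_encode (cov_history G k))"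
  by (induction k) auto

lemma computable1_cov_history: "computable1 G \<Longrightarrow> computable1 (\<lambda>n. list_encode (cov_history G n))"
proof -
  assume G: "computable1 G"
  let ?s = "\<lambda>w. prod_encode (Suc (fst (prod_decode (snd (prod_decode w)))),
       Suc (prod_encode (G (snd (prod_decode w)), snd (prod_decode (snd (prod_decode w))))))"
  have s: "computable1 ?s" by (intro computable1_intros computable1_comp[OF G])
  have "computable1 (\<lambda>x. ((\<lambda>z. ?s (prod_encode (x, z))) ^^ x) (prod_encode (0, 0)))"
    by (rule computable1_funpow[OF computable1_id computable1_const s])
  then have "computable1
      (\<lambda>x. snd (prod_decode (((\<lambda>z. ?s (prod_encode (x, z))) ^^ x) (prod_encode (0, 0)))))"
    by (rule computable1_snd_comp)
  then show ?thesis by (rule computable1_cong) (simp add: funpow_cov_history)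
qed

lemma computable1_cov_rec: "computable1 G \<Longrightarrow> computable1 (cov_rec G)"
proof -
  assume G: "computable1 G"
  have "computable1 (\<lambda>n. G (prod_encode (n, list_encode (cov_history G n))))"
    by (intro computable1_comp[OF G] computable1_intros computable1_cov_history[OF G])
  then show ?thesis unfolding cov_rec_def[abs_def] .
qed

text \<open>The history lists the earlier values latest first, so the value at \<open>m < n\<close> sits at
  position \<open>n - 1 - m\<close>.\<close>

definition history_value :: "nat \<Rightarrow> nat \<Rightarrow> nat \<Rightarrow> nat" where
  "history_value h n m = nth_code h (n - Suc m)"

lemma computable1_history_value [computable1_intros]:
  "computable1 H \<Longrightarrow> computable1 N \<Longrightarrow> computable1 M \<Longrightarrow>
    computable1 (\<lambda>x. history_value (H x) (N x) (M x))"
  unfolding history_value_def by (intro computable1_intros)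

lemma history_value_cov_history:
  "m < n \<Longrightarrow> history_value (list_encode (cov_history G n)) n m = cov_rec G m"
  unfolding history_value_def by (simp add: nth_code_list_encode cov_history_nth)

section \<open>Time warps\<close>

lemma Sup_range_enat: "Sup (range enat) = \<infinity>"
proof -
  have "infinite (range enat)" by (simp add: inj_on_def finite_image_iff)
  then show ?thesis by (simp add: Sup_enat_def)
qed

lemma enat_le_all_imp_infinity: "(\<And>n. enat n \<le> x) \<Longrightarrow> x = \<infinity>"
  by (metis enat_ord_simps(2) lessI not_le not_infinity_eq)

lemma time_warp_mono: "time_warp f \<Longrightarrow> mono f"
proof (rule monoI)
  fix a b :: enat assume "time_warp f" "a \<le> b"
  then have "f (Sup {a, b}) = Sup (f ` {a, b})" unfolding time_warp_def by blast
  moreover have "Sup {a, b} = b" using \<open>a \<le> b\<close> by (simp add: sup_absorb2)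
  ultimately have "f b = sup (f a) (f b)" by simp
  then show "f a \<le> f b" by (metis sup.cobounded1)
qed

lemma time_warp_zero: "time_warp f \<Longrightarrow> f 0 = 0"
proof -
  assume "time_warp f"
  then have "f (Sup {}) = Sup (f ` {})" unfolding time_warp_def by blast
  then show ?thesis by (simp add: bot_enat_def)
qed

lemma time_warp_infinity: "time_warp f \<Longrightarrow> f \<infinity> = (SUP n. f (enat n))"
proof -
  assume "time_warp f"
  then have "f (Sup (range enat)) = Sup (f ` range enat)" unfolding time_warp_def by blast
  then show ?thesis by (simp add: Sup_range_enat image_comp)
qed

lemma time_warpI:
  assumes m: "mono f" and z: "f 0 = 0" and i: "f \<infinity> = (SUP n. f (enat n))"
  shows "time_warp f"
  unfolding time_warp_def
proof
  fix X :: "enat set"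
  consider "X = {}" | "finite X" "X \<noteq> {}" | "infinite X" by blast
  then show "f (Sup X) = Sup (f ` X)"
  proof cases
    case 1
    then show ?thesis using z by (simp add: bot_enat_def)
  next
    case 2
    then show ?thesis using mono_Max_commute[OF m] by (simp add: cSup_eq_Max)
  next
    case 3
    have "f (enat n) \<le> Sup (f ` X)" for n
    proof -
      from 3 obtain a where "a \<in> X" "enat n \<le> a"
        using finite_enat_bounded by (meson linear)
      then show ?thesis using m by (meson SUP_upper2 monoD)
    qed
    then have "f \<infinity> \<le> Sup (f ` X)" using i by (simp add: SUP_least)
    moreover have "Sup (f ` X) \<le> f \<infinity>"
      by (rule Sup_least) (use m in \<open>auto simp: monoD\<close>)
    moreover have "Sup X = \<infinity>" using 3 by (auto simp: Sup_enat_def)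
    ultimately show ?thesis by simp
  qed
qed

lemma time_warp_id: "time_warp id"
  unfolding time_warp_def by simp

lemma time_warp_comp: "time_warp f \<Longrightarrow> time_warp g \<Longrightarrow> time_warp (f \<circ> g)"
  unfolding time_warp_def by (simp add: image_comp)

lemma time_warp_sup: "time_warp f \<Longrightarrow> time_warp g \<Longrightarrow> time_warp (sup f g)"
  unfolding time_warp_def by (simp add: Complete_Lattices.SUP_sup_distrib)

lemma time_warp_inf: assumes f: "time_warp f" and g: "time_warp g" shows "time_warp (inf f g)"
proof (rule time_warpI)
  have mf: "mono f" and mg: "mono g" using f g by (auto simp: time_warp_mono)
  show "mono (inf f g)" using mf mg by (auto simp: mono_def le_infI1 le_infI2)
  show "inf f g 0 = 0" using f g by (simp add: time_warp_zero)
  have "inf f g \<infinity> = inf (SUP n. f (enat n)) (SUP n. g (enat n))"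
    using f g by (simp add: time_warp_infinity)
  also have "\<dots> = (SUP n. SUP m. inf (f (enat n)) (g (enat m)))"
    by (rule SUP_inf_distrib2)
  also have "\<dots> = (SUP n. inf f g (enat n))"
  proof (rule antisym)
    show "(SUP n. SUP m. inf (f (enat n)) (g (enat m))) \<le> (SUP n. inf f g (enat n))"
    proof (intro SUP_least)
      fix n m
      have "inf (f (enat n)) (g (enat m)) \<le> inf (f (enat (max n m))) (g (enat (max n m)))"
        using mf mg by (intro inf_mono) (auto simp: monoD)
      also have "\<dots> \<le> (SUP n. inf f g (enat n))" by (rule SUP_upper2[of "max n m"]) auto
      finally show "inf (f (enat n)) (g (enat m)) \<le> (SUP n. inf f g (enat n))" .
    qed
    show "(SUP n. inf f g (enat n)) \<le> (SUP n. SUP m. inf (f (enat n)) (g (enat m)))"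
    proof (rule SUP_least)
      fix n :: nat
      have "inf f g (enat n) = inf (f (enat n)) (g (enat n))" by simp
      also have "\<dots> \<le> (SUP m. inf (f (enat n)) (g (enat m)))" by (rule SUP_upper) simp
      also have "\<dots> \<le> (SUP n. SUP m. inf (f (enat n)) (g (enat m)))"
        by (rule SUP_upper[of n UNIV "\<lambda>n. SUP m. inf (f (enat n)) (g (enat m))"]) simp
      finally show "inf f g (enat n) \<le> (SUP n. SUP m. inf (f (enat n)) (g (enat m)))" .
    qed
  qed
  finally show "inf f g \<infinity> = (SUP n. inf f g (enat n))" .
qed

section \<open>The star operation\<close>

lemma pw_enat: "pw (enat n) = enat (n - 1)"
proof -
  have set: "{of_nat k | k :: nat. of_nat k < enat n} = enat ` {..<n}"
    by (auto simp: of_nat_eq_enat)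
  show ?thesis
  proof (cases n)
    case 0 then show ?thesis unfolding pw_def set by (simp add: bot_enat_def zero_enat_def)
  next
    case (Suc m)
    have "Sup (enat ` {..<n}) = enat m"
    proof (rule antisym)
      show "Sup (enat ` {..<n}) \<le> enat m" by (rule Sup_least) (auto simp: Suc)
      show "enat m \<le> Sup (enat ` {..<n})" by (rule Sup_upper) (auto simp: Suc)
    qed
    then show ?thesis unfolding pw_def set using Suc by simp
  qed
qed

lemma pw_infinity: "pw \<infinity> = \<infinity>"
proof -
  have "enat n \<le> pw \<infinity>" for n
    unfolding pw_def by (rule Sup_upper) (auto simp: of_nat_eq_enat)
  then show ?thesis by (rule enat_le_all_imp_infinity)
qed

text \<open>For finite \<open>m > 0\<close> we have \<open>f k \<le> p m \<longleftrightarrow> f k < m\<close>, so on finite arguments \<open>f\<star>\<close>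
  is the supremum of \<open>{k. f k < m}\<close>; its value at \<open>\<infinity>\<close> is then forced by join preservation.\<close>

definition below_sup :: "(enat \<Rightarrow> enat) \<Rightarrow> enat \<Rightarrow> enat" where
  "below_sup f m = Sup {k. f k < m}"

definition explicit_star :: "(enat \<Rightarrow> enat) \<Rightarrow> enat \<Rightarrow> enat" where
  "explicit_star f m = (if m = \<infinity> then (SUP n. below_sup f (enat n)) else below_sup f m)"

lemma less_enat_le_pred: "x < enat n \<Longrightarrow> x \<le> enat (n - Suc 0)"
  by (cases x) auto

lemma le_below_sup_iff:
  assumes f: "time_warp f" and n: "0 < n"
  shows "k \<le> below_sup f (enat n) \<longleftrightarrow> f k < enat n"
proof
  assume "f k < enat n" then show "k \<le> below_sup f (enat n)" unfolding below_sup_def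
    by (simp add: Sup_upper)
next
  assume k: "k \<le> below_sup f (enat n)"
  have "f (below_sup f (enat n)) = Sup (f ` {k. f k < enat n})"
    using f unfolding below_sup_def time_warp_def by blast
  also have "\<dots> \<le> enat (n - Suc 0)" by (rule Sup_least) (auto intro: less_enat_le_pred)
  also have "\<dots> < enat n" using n by simp
  finally have "f (below_sup f (enat n)) < enat n" .
  moreover have "f k \<le> f (below_sup f (enat n))" using k time_warp_mono[OF f] by (simp add: monoD)
  ultimately show "f k < enat n" by simp
qed

lemma below_sup_0: "below_sup f 0 = 0"
  unfolding below_sup_def by (simp add: bot_enat_def)

lemma below_sup_enat_0 [simp]: "below_sup f (enat 0) = 0"
  using below_sup_0 by (simp add: zero_enat_def)

lemma below_sup_mono: "a \<le> b \<Longrightarrow> below_sup f a \<le> below_sup f b"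
  unfolding below_sup_def by (rule Sup_subset_mono) auto

lemma explicit_star_enat [simp]: "explicit_star f (enat n) = below_sup f (enat n)"
  by (simp add: explicit_star_def)

lemma explicit_star_0 [simp]: "explicit_star f 0 = 0"
  by (simp add: explicit_star_def below_sup_0)

lemma explicit_star_infinity: "explicit_star f \<infinity> = (SUP n. below_sup f (enat n))"
  by (simp add: explicit_star_def)

lemma time_warp_explicit_star: "time_warp (explicit_star f)"
proof (rule time_warpI)
  show "mono (explicit_star f)"
  proof (rule monoI)
    fix a b :: enat assume ab: "a \<le> b"
    show "explicit_star f a \<le> explicit_star f b"
    proof (cases b)
      case (enat nb)
      then obtain na where "a = enat na" using ab by (cases a) auto
      then show ?thesis using ab enat by (simp add: below_sup_mono)
    next
      case infinity
      show ?thesis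
      proof (cases a)
        case (enat na)
        then show ?thesis using infinity SUP_upper[of na UNIV "\<lambda>n. below_sup f (enat n)"]
          by (simp add: explicit_star_infinity)
      next
        case infinity
        then show ?thesis using \<open>b = \<infinity>\<close> by simp
      qed
    qed
  qed
  show "explicit_star f 0 = 0" using below_sup_0 by (simp add: zero_enat_def)
  show "explicit_star f \<infinity> = (SUP n. explicit_star f (enat n))" by (simp add: explicit_star_infinity)
qed

lemma comp_explicit_star_le_pw: assumes f: "time_warp f" shows "f (explicit_star f m) \<le> pw m"
proof (cases m)
  case (enat n)
  show ?thesis
  proof (cases n)
    case 0
    then show ?thesis using enat time_warp_zero[OF f] by simp
  next
    case (Suc j)
    have "f (below_sup f (enat n)) < enat n"
      using le_below_sup_iff[OF f, of n "below_sup f (enat n)"] Suc by simp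
    then have "f (below_sup f (enat n)) \<le> enat (n - Suc 0)" by (rule less_enat_le_pred)
    then show ?thesis using enat Suc by (simp add: pw_enat)
  qed
next
  case infinity then show ?thesis by (simp add: pw_infinity)
qed

lemma le_explicit_star:
  assumes f: "time_warp f" and h: "time_warp h" and hb: "\<And>m. f (h m) \<le> pw m"
  shows "h \<le> explicit_star f"
proof -
  have fin: "h (enat n) \<le> below_sup f (enat n)" for n
  proof (cases n)
    case 0 then show ?thesis using time_warp_zero[OF h] by (simp add: zero_enat_def[symmetric])
  next
    case (Suc j)
    have "f (h (enat n)) \<le> enat j" using hb[of "enat n"] Suc by (simp add: pw_enat)
    then have "f (h (enat n)) < enat n" using Suc by (metis enat_ord_simps(2) le_less_trans lessI)
    then show ?thesis using le_below_sup_iff[OF f] Suc by simp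
  qed
  show ?thesis
  proof (rule le_funI)
    fix m show "h m \<le> explicit_star f m"
    proof (cases m)
      case (enat n) then show ?thesis using fin by simp
    next
      case infinity
      have "(SUP n. h (enat n)) \<le> (SUP n. below_sup f (enat n))"
      proof (rule SUP_least)
        fix n show "h (enat n) \<le> (SUP n. below_sup f (enat n))"
          using fin[of n] SUP_upper[of n UNIV "\<lambda>n. below_sup f (enat n)"] by simp
      qed
      then show ?thesis
        using time_warp_infinity[OF h] infinity by (simp add: explicit_star_infinity)
    qed
  qed
qed

lemma tw_star_eq_explicit_star: assumes f: "time_warp f" shows "tw_star f = explicit_star f"
  unfolding tw_star_def tw_res_def
proof (rule Greatest_equality)
  show "time_warp (explicit_star f) \<and> f \<circ> explicit_star f \<le> pw"
    using time_warp_explicit_star comp_explicit_star_le_pw[OF f] by (auto simp: le_fun_def)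
next
  fix y assume "time_warp y \<and> f \<circ> y \<le> pw"
  then show "y \<le> explicit_star f" using le_explicit_star[OF f] by (auto simp: le_fun_def)
qed

lemma time_warp_tw_star: "time_warp f \<Longrightarrow> time_warp (tw_star f)"
  using tw_star_eq_explicit_star time_warp_explicit_star by simp

lemma le_tw_star_iff:
  assumes f: "time_warp f" and h: "time_warp h"
  shows "h \<le> tw_star f \<longleftrightarrow> (\<forall>m. f (h m) \<le> pw m)"
proof
  assume "h \<le> tw_star f"
  then have "\<And>m. f (h m) \<le> f (explicit_star f m)"
    using time_warp_mono[OF f] tw_star_eq_explicit_star[OF f]
    by (simp add: le_fun_def monoD)
  then show "\<forall>m. f (h m) \<le> pw m" using comp_explicit_star_le_pw[OF f] order_trans by blast
next
  assume "\<forall>m. f (h m) \<le> pw m"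
  then show "h \<le> tw_star f" using le_explicit_star[OF f h] tw_star_eq_explicit_star[OF f] by simp
qed


lemma explicit_star_less_iff:
  assumes f: "time_warp f" and n: "0 < n"
  shows "explicit_star f k < enat n \<longleftrightarrow> k \<le> f (enat n)"
proof (cases k)
  case (enat j)
  show ?thesis
  proof (cases j)
    case 0 then show ?thesis using enat n by (simp add: zero_enat_def[symmetric] enat_0_iff)
  next
    case (Suc i)
    have "explicit_star f k < enat n \<longleftrightarrow> \<not> enat n \<le> below_sup f (enat j)"
      using enat by (simp add: not_le)
    also have "\<dots> \<longleftrightarrow> \<not> f (enat n) < enat j" using le_below_sup_iff[OF f, of j "enat n"] Suc by simp
    also have "\<dots> \<longleftrightarrow> k \<le> f (enat n)" using enat by (simp add: not_less)
    finally show ?thesis .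
  qed
next
  case infinity
  show ?thesis
  proof
    assume lt: "explicit_star f k < enat n"
    show "k \<le> f (enat n)"
    proof (rule ccontr)
      assume "\<not> k \<le> f (enat n)"
      then obtain M where M: "f (enat n) = enat M" using infinity by (cases "f (enat n)") auto
      then have "f (enat n) < enat (Suc M)" by simp
      then have "enat n \<le> below_sup f (enat (Suc M))"
        using le_below_sup_iff[OF f, of "Suc M" "enat n"] by simp
      also have "\<dots> \<le> explicit_star f k"
        using infinity SUP_upper[of "Suc M" UNIV "\<lambda>n. below_sup f (enat n)"]
        by (simp add: explicit_star_infinity)
      finally show False using lt by simp
    qed
  next
    assume "k \<le> f (enat n)"
    then have fi: "f (enat n) = \<infinity>" using infinity by simp
    have "below_sup f (enat j) \<le> enat (n - Suc 0)" for j
    proof (cases j)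
      case 0 then show ?thesis by simp
    next
      case (Suc i)
      have "\<not> enat n \<le> below_sup f (enat j)"
        using le_below_sup_iff[OF f, of j "enat n"] Suc fi by simp
      then show ?thesis using less_enat_le_pred by (simp add: not_le)
    qed
    then have "explicit_star f k \<le> enat (n - Suc 0)"
      using infinity by (simp add: explicit_star_infinity SUP_least)
    also have "\<dots> < enat n" using n by simp
    finally show "explicit_star f k < enat n" .
  qed
qed

lemma explicit_star_involutive: assumes f: "time_warp f" shows "explicit_star (explicit_star f) = f"
proof -
  have fin: "below_sup (explicit_star f) (enat n) = f (enat n)" for n
  proof (cases n)
    case 0 then show ?thesis using time_warp_zero[OF f] by (simp add: zero_enat_def)
  next
    case (Suc i)
    then have n: "0 < n" by simp
    have iff: "k \<le> below_sup (explicit_star f) (enat n) \<longleftrightarrow> k \<le> f (enat n)" for k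
      using le_below_sup_iff[OF time_warp_explicit_star n] explicit_star_less_iff[OF f n] by simp
    show ?thesis using iff[of "f (enat n)"] iff[of "below_sup (explicit_star f) (enat n)"]
      by (simp add: antisym)
  qed
  show ?thesis
  proof (rule ext)
    fix m show "explicit_star (explicit_star f) m = f m"
    proof (cases m)
      case (enat n) then show ?thesis using fin by simp
    next
      case infinity then show ?thesis
        using fin time_warp_infinity[OF f] by (simp add: explicit_star_infinity)
    qed
  qed
qed

lemma tw_star_involutive: "time_warp f \<Longrightarrow> tw_star (tw_star f) = f"
  using tw_star_eq_explicit_star time_warp_explicit_star explicit_star_involutive by simp

lemma tw_star_antimono: "time_warp a \<Longrightarrow> time_warp b \<Longrightarrow> a \<le> b \<Longrightarrow> tw_star b \<le> tw_star a"
proof -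
  assume a: "time_warp a" and b: "time_warp b" and ab: "a \<le> b"
  have "\<forall>m. b (tw_star b m) \<le> pw m" using le_tw_star_iff[OF b time_warp_tw_star[OF b]] by simp
  then have "\<forall>m. a (tw_star b m) \<le> pw m" using ab by (meson le_fun_def order_trans)
  then show ?thesis using le_tw_star_iff[OF a time_warp_tw_star[OF b]] by simp
qed

lemma tw_star_sup: assumes f: "time_warp f" and g: "time_warp g"
  shows "tw_star (sup f g) = inf (tw_star f) (tw_star g)"
proof -
  have fg: "time_warp (sup f g)" using time_warp_sup f g .
  have iff: "h \<le> tw_star (sup f g) \<longleftrightarrow> h \<le> inf (tw_star f) (tw_star g)" if h: "time_warp h" for h
    using le_tw_star_iff[OF fg h] le_tw_star_iff[OF f h] le_tw_star_iff[OF g h] by auto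
  have t1: "time_warp (tw_star (sup f g))" by (rule time_warp_tw_star[OF fg])
  have t2: "time_warp (inf (tw_star f) (tw_star g))"
    by (rule time_warp_inf[OF time_warp_tw_star[OF f] time_warp_tw_star[OF g]])
  show ?thesis using iff[OF t1] iff[OF t2] by (simp add: antisym)
qed

lemma tw_star_inf: assumes f: "time_warp f" and g: "time_warp g"
  shows "tw_star (inf f g) = sup (tw_star f) (tw_star g)"
proof -
  have s: "time_warp (tw_star f)" "time_warp (tw_star g)"
    using f g by (simp_all add: time_warp_tw_star)
  have "inf f g = tw_star (sup (tw_star f) (tw_star g))"
    using tw_star_sup[OF s] tw_star_involutive[OF f] tw_star_involutive[OF g] by simp
  then show ?thesis
    using tw_star_involutive[OF time_warp_sup[OF s]] by simp
qed

lemma le_iff_id_le_tw_star: assumes f: "time_warp f" and g: "time_warp g"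
  shows "f \<le> g \<longleftrightarrow> id \<le> tw_star (f \<circ> tw_star g)"
proof -
  have "id \<le> tw_star (f \<circ> tw_star g) \<longleftrightarrow> (\<forall>m. f (tw_star g m) \<le> pw m)"
    using le_tw_star_iff[OF time_warp_comp[OF f time_warp_tw_star[OF g]] time_warp_id] by simp
  also have "\<dots> \<longleftrightarrow> tw_star g \<le> tw_star f" using le_tw_star_iff[OF f time_warp_tw_star[OF g]] by simp
  also have "\<dots> \<longleftrightarrow> f \<le> g"
  proof
    assume "tw_star g \<le> tw_star f"
    then have "tw_star (tw_star f) \<le> tw_star (tw_star g)"
      by (rule tw_star_antimono[OF time_warp_tw_star[OF g] time_warp_tw_star[OF f]])
    then show "f \<le> g" using tw_star_involutive[OF f] tw_star_involutive[OF g] by simp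
  next
    assume "f \<le> g" then show "tw_star g \<le> tw_star f" by (rule tw_star_antimono[OF f g])
  qed
  finally show ?thesis by simp
qed


lemma time_warp_SUP:
  "finite A \<Longrightarrow> A \<noteq> {} \<Longrightarrow> (\<forall>a\<in>A. time_warp (F a)) \<Longrightarrow> time_warp (SUP a\<in>A. F a)"
proof (induction A rule: finite_ne_induct)
  case (singleton x) then show ?case by simp
next
  case (insert x A)
  have a: "time_warp (SUP a\<in>A. F a)" using insert.IH insert.prems by blast
  have b: "time_warp (F x)" using insert.prems by blast
  show ?case unfolding SUP_insert by (rule time_warp_sup[OF b a])
qed

lemma time_warp_INF:
  "finite A \<Longrightarrow> A \<noteq> {} \<Longrightarrow> (\<forall>a\<in>A. time_warp (F a)) \<Longrightarrow> time_warp (INF a\<in>A. F a)"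
proof (induction A rule: finite_ne_induct)
  case (singleton x) then show ?case by simp
next
  case (insert x A)
  have a: "time_warp (INF a\<in>A. F a)" using insert.IH insert.prems by blast
  have b: "time_warp (F x)" using insert.prems by blast
  show ?case unfolding INF_insert by (rule time_warp_inf[OF b a])
qed

lemma tw_star_SUP:
  "finite A \<Longrightarrow> A \<noteq> {} \<Longrightarrow> (\<forall>a\<in>A. time_warp (F a)) \<Longrightarrow>
   tw_star (SUP a\<in>A. F a) = (INF a\<in>A. tw_star (F a))"
proof (induction A rule: finite_ne_induct)
  case (singleton x) then show ?case by simp
next
  case (insert x A)
  have t: "time_warp (SUP a\<in>A. F a)" using insert.hyps insert.prems by (intro time_warp_SUP) auto
  have b: "time_warp (F x)" using insert.prems by blast
  have IH: "tw_star (SUP a\<in>A. F a) = (INF a\<in>A. tw_star (F a))" using insert.IH insert.prems by blast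
  have "tw_star (sup (F x) (SUP a\<in>A. F a)) = inf (tw_star (F x)) (tw_star (SUP a\<in>A. F a))"
    by (rule tw_star_sup[OF b t])
  also have "\<dots> = inf (tw_star (F x)) (INF a\<in>A. tw_star (F a))" by (simp only: IH)
  finally show ?case unfolding SUP_insert INF_insert .
qed

lemma tw_star_INF:
  "finite A \<Longrightarrow> A \<noteq> {} \<Longrightarrow> (\<forall>a\<in>A. time_warp (F a)) \<Longrightarrow>
   tw_star (INF a\<in>A. F a) = (SUP a\<in>A. tw_star (F a))"
proof (induction A rule: finite_ne_induct)
  case (singleton x) then show ?case by simp
next
  case (insert x A)
  have t: "time_warp (INF a\<in>A. F a)" using insert.hyps insert.prems by (intro time_warp_INF) auto
  have b: "time_warp (F x)" using insert.prems by blast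
  have IH: "tw_star (INF a\<in>A. F a) = (SUP a\<in>A. tw_star (F a))" using insert.IH insert.prems by blast
  have "tw_star (inf (F x) (INF a\<in>A. F a)) = sup (tw_star (F x)) (tw_star (INF a\<in>A. F a))"
    by (rule tw_star_inf[OF b t])
  also have "\<dots> = sup (tw_star (F x)) (SUP a\<in>A. tw_star (F a))" by (simp only: IH)
  finally show ?case unfolding SUP_insert INF_insert .
qed

lemma comp_SUP_left: "time_warp f \<Longrightarrow> f \<circ> (SUP a\<in>A. G a) = (SUP a\<in>A. f \<circ> G a)"
proof (rule ext)
  fix x assume f: "time_warp f"
  have "f (Sup ((\<lambda>a. G a x) ` A)) = Sup (f ` (\<lambda>a. G a x) ` A)"
    using f unfolding time_warp_def by blast
  then show "(f \<circ> (SUP a\<in>A. G a)) x = (SUP a\<in>A. f \<circ> G a) x" by (simp add: image_comp)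
qed

lemma mono_Inf_finite:
  "mono (f :: 'a::complete_linorder \<Rightarrow> 'b::complete_linorder) \<Longrightarrow> finite X \<Longrightarrow> X \<noteq> {} \<Longrightarrow>
    f (Inf X) = Inf (f ` X)"
  by (simp add: cInf_eq_Min mono_Min_commute)

lemma comp_INF_left:
  "mono (f :: 'b::complete_linorder \<Rightarrow> 'c::complete_linorder) \<Longrightarrow> finite A \<Longrightarrow> A \<noteq> {} \<Longrightarrow>
    f \<circ> (INF a\<in>A. G a) = (INF a\<in>A. f \<circ> G a)"
proof (rule ext)
  fix x assume "mono f" "finite A" "A \<noteq> {}"
  then have "f (Inf ((\<lambda>a. G a x) ` A)) = Inf (f ` (\<lambda>a. G a x) ` A)" by (intro mono_Inf_finite) auto
  then show "(f \<circ> (INF a\<in>A. G a)) x = (INF a\<in>A. f \<circ> G a) x" by (simp add: image_comp)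
qed

lemma comp_SUP_right: "(SUP a\<in>A. G a) \<circ> h = (SUP a\<in>A. G a \<circ> h :: _ \<Rightarrow> _::complete_lattice)"
  by (rule ext) (simp add: image_image comp_def)

lemma comp_INF_right: "(INF a\<in>A. G a) \<circ> h = (INF a\<in>A. G a \<circ> h :: _ \<Rightarrow> _::complete_lattice)"
  by (rule ext) (simp add: image_image comp_def)

section \<open>Normal forms of terms\<close>

definition map_product :: "('a \<Rightarrow> 'b \<Rightarrow> 'c) \<Rightarrow> 'a list \<Rightarrow> 'b list \<Rightarrow> 'c list" where
  "map_product f xs ys = concat (map (\<lambda>x. map (f x) ys) xs)"

lemma set_map_product: "set (map_product f xs ys) = (\<Union>x\<in>set xs. f x ` set ys)"
  unfolding map_product_def by auto

lemma map_product_eq_Nil_iff [simp]: "map_product f xs ys = [] \<longleftrightarrow> xs = [] \<or> ys = []"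
  unfolding map_product_def by (cases xs) auto

lemma SUP_map_product:
  "(SUP z\<in>set (map_product f xs ys). H z) =
      (SUP x\<in>set xs. SUP y\<in>set ys. H (f x y) :: _ :: complete_lattice)"
  by (simp add: set_map_product SUP_UNION image_image)

lemma INF_map_product:
  "(INF z\<in>set (map_product f xs ys). H z) =
      (INF x\<in>set xs. INF y\<in>set ys. H (f x y) :: _ :: complete_lattice)"
  unfolding set_map_product by (rule order_antisym) (blast intro: INF_greatest INF_lower2)+

definition time_warps :: "(nat \<Rightarrow> enat \<Rightarrow> enat) \<Rightarrow> bool" where
  "time_warps \<sigma> \<longleftrightarrow> (\<forall>i. time_warp (\<sigma> i))"

lemma time_warp_eval: "time_warps \<sigma> \<Longrightarrow> time_warp (eval \<sigma> t)"
  by (induction t)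
    (auto simp: time_warps_def time_warp_inf time_warp_sup time_warp_comp time_warp_tw_star
      time_warp_id)

lemma time_warp_INF_eval: "time_warps \<sigma> \<Longrightarrow> a \<noteq> [] \<Longrightarrow> time_warp (INF u\<in>set a. eval \<sigma> u)"
  by (intro time_warp_INF time_warp_eval ballI) auto

lemma time_warp_SUP_eval: "time_warps \<sigma> \<Longrightarrow> a \<noteq> [] \<Longrightarrow> time_warp (SUP u\<in>set a. eval \<sigma> u)"
  by (intro time_warp_SUP time_warp_eval ballI) auto

text \<open>A list of lists of basic terms stands for the join of the meets of its members in
  \<^term>\<open>dnf\<close>, and for the meet of their joins in \<^term>\<open>cnf\<close>.\<close>

fun dnf :: "trm \<Rightarrow> trm list list" and cnf :: "trm \<Rightarrow> trm list list" where
  "dnf (Var i) = [[Var i]]"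
| "dnf (Meet s t) = map_product (@) (dnf s) (dnf t)"
| "dnf (Join s t) = dnf s @ dnf t"
| "dnf (Dot s t) = map_product (map_product Dot) (dnf s) (dnf t)"
| "dnf (Prime s) = map (map Prime) (cnf s)"
| "dnf One = [[One]]"
| "cnf (Var i) = [[Var i]]"
| "cnf (Meet s t) = cnf s @ cnf t"
| "cnf (Join s t) = map_product (@) (cnf s) (cnf t)"
| "cnf (Dot s t) = map_product (map_product Dot) (cnf s) (cnf t)"
| "cnf (Prime s) = map (map Prime) (dnf s)"
| "cnf One = [[One]]"

definition basic_clauses :: "trm list list \<Rightarrow> bool" where
  "basic_clauses L \<longleftrightarrow> L \<noteq> [] \<and> (\<forall>a\<in>set L. a \<noteq> [] \<and> (\<forall>u\<in>set a. basic u))"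

lemma basic_clausesD:
  "basic_clauses L \<Longrightarrow> L \<noteq> []"
  "basic_clauses L \<Longrightarrow> a \<in> set L \<Longrightarrow> a \<noteq> []"
  "basic_clauses L \<Longrightarrow> a \<in> set L \<Longrightarrow> u \<in> set a \<Longrightarrow> basic u"
  unfolding basic_clauses_def by blast+

lemma basic_clauses_dnf_cnf: "basic_clauses (dnf t) \<and> basic_clauses (cnf t)"
  by (induction t) (auto simp: basic_clauses_def set_map_product intro: basic.intros)

definition join_of_meets :: "(nat \<Rightarrow> enat \<Rightarrow> enat) \<Rightarrow> trm list list \<Rightarrow> enat \<Rightarrow> enat" where
  "join_of_meets \<sigma> L = (SUP a\<in>set L. INF u\<in>set a. eval \<sigma> u)"

definition meet_of_joins :: "(nat \<Rightarrow> enat \<Rightarrow> enat) \<Rightarrow> trm list list \<Rightarrow> enat \<Rightarrow> enat" where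
  "meet_of_joins \<sigma> L = (INF a\<in>set L. SUP u\<in>set a. eval \<sigma> u)"

lemma join_of_meets_append: "join_of_meets \<sigma> (A @ B) = sup (join_of_meets \<sigma> A) (join_of_meets \<sigma> B)"
  unfolding join_of_meets_def by (simp only: set_append SUP_union)

lemma meet_of_joins_append: "meet_of_joins \<sigma> (A @ B) = inf (meet_of_joins \<sigma> A) (meet_of_joins \<sigma> B)"
  unfolding meet_of_joins_def by (simp only: set_append INF_union)

lemma join_of_meets_map_product_append:
  "join_of_meets \<sigma> (map_product (@) A B) = inf (join_of_meets \<sigma> A) (join_of_meets \<sigma> B)"
proof -
  have "join_of_meets \<sigma> (map_product (@) A B) =
      (SUP a\<in>set A. SUP b\<in>set B. inf (INF u\<in>set a. eval \<sigma> u) (INF u\<in>set b. eval \<sigma> u))"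
    unfolding join_of_meets_def SUP_map_product by (simp only: set_append INF_union)
  also have "\<dots> = inf (join_of_meets \<sigma> A) (join_of_meets \<sigma> B)"
    unfolding join_of_meets_def by (rule SUP_inf_distrib2[symmetric])
  finally show ?thesis .
qed

lemma meet_of_joins_map_product_append:
  "meet_of_joins \<sigma> (map_product (@) A B) = sup (meet_of_joins \<sigma> A) (meet_of_joins \<sigma> B)"
proof -
  have "meet_of_joins \<sigma> (map_product (@) A B) =
      (INF a\<in>set A. INF b\<in>set B. sup (SUP u\<in>set a. eval \<sigma> u) (SUP u\<in>set b. eval \<sigma> u))"
    unfolding meet_of_joins_def INF_map_product by (simp only: set_append SUP_union)
  also have "\<dots> = sup (meet_of_joins \<sigma> A) (meet_of_joins \<sigma> B)"
    unfolding meet_of_joins_def by (rule INF_sup_distrib2[symmetric])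
  finally show ?thesis .
qed

lemma INF_map_product_Dot:
  assumes \<sigma>: "time_warps \<sigma>" and b: "b \<noteq> []"
  shows "(INF x\<in>set (map_product Dot a b). eval \<sigma> x) =
      (INF u\<in>set a. eval \<sigma> u) \<circ> (INF v\<in>set b. eval \<sigma> v)"
proof -
  have "(INF x\<in>set (map_product Dot a b). eval \<sigma> x) =
      (INF u\<in>set a. INF v\<in>set b. eval \<sigma> u \<circ> eval \<sigma> v)"
    by (simp add: INF_map_product)
  also have "\<dots> = (INF u\<in>set a. eval \<sigma> u \<circ> (INF v\<in>set b. eval \<sigma> v))"
    using b by (intro INF_cong refl comp_INF_left[symmetric] time_warp_mono time_warp_eval \<sigma>) auto
  also have "\<dots> = (INF u\<in>set a. eval \<sigma> u) \<circ> (INF v\<in>set b. eval \<sigma> v)"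
    by (rule comp_INF_right[symmetric])
  finally show ?thesis .
qed

lemma SUP_map_product_Dot:
  assumes \<sigma>: "time_warps \<sigma>"
  shows "(SUP x\<in>set (map_product Dot a b). eval \<sigma> x) =
      (SUP u\<in>set a. eval \<sigma> u) \<circ> (SUP v\<in>set b. eval \<sigma> v)"
proof -
  have "(SUP x\<in>set (map_product Dot a b). eval \<sigma> x) =
      (SUP u\<in>set a. SUP v\<in>set b. eval \<sigma> u \<circ> eval \<sigma> v)"
    by (simp add: SUP_map_product)
  also have "\<dots> = (SUP u\<in>set a. eval \<sigma> u \<circ> (SUP v\<in>set b. eval \<sigma> v))"
    by (intro SUP_cong refl comp_SUP_left[symmetric] time_warp_eval \<sigma>)
  also have "\<dots> = (SUP u\<in>set a. eval \<sigma> u) \<circ> (SUP v\<in>set b. eval \<sigma> v)"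
    by (rule comp_SUP_right[symmetric])
  finally show ?thesis .
qed

lemma join_of_meets_map_product_Dot:
  assumes \<sigma>: "time_warps \<sigma>" and A: "basic_clauses A" and B: "basic_clauses B"
  shows "join_of_meets \<sigma> (map_product (map_product Dot) A B) =
      join_of_meets \<sigma> A \<circ> join_of_meets \<sigma> B"
proof -
  have "join_of_meets \<sigma> (map_product (map_product Dot) A B) =
      (SUP a\<in>set A. SUP b\<in>set B. (INF u\<in>set a. eval \<sigma> u) \<circ> (INF v\<in>set b. eval \<sigma> v))"
    unfolding join_of_meets_def SUP_map_product
    using B by (intro SUP_cong refl INF_map_product_Dot[OF \<sigma>]) (auto dest: basic_clausesD)
  also have "\<dots> = (SUP a\<in>set A. (INF u\<in>set a. eval \<sigma> u) \<circ> (SUP b\<in>set B. INF v\<in>set b. eval \<sigma> v))"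
    using A by (intro SUP_cong refl comp_SUP_left[symmetric] time_warp_INF_eval[OF \<sigma>])
      (auto dest: basic_clausesD)
  also have "\<dots> = join_of_meets \<sigma> A \<circ> join_of_meets \<sigma> B"
    unfolding join_of_meets_def by (rule comp_SUP_right[symmetric])
  finally show ?thesis .
qed

lemma meet_of_joins_map_product_Dot:
  assumes \<sigma>: "time_warps \<sigma>" and A: "basic_clauses A" and B: "basic_clauses B"
  shows "meet_of_joins \<sigma> (map_product (map_product Dot) A B) =
      meet_of_joins \<sigma> A \<circ> meet_of_joins \<sigma> B"
proof -
  have "meet_of_joins \<sigma> (map_product (map_product Dot) A B) =
      (INF a\<in>set A. INF b\<in>set B. (SUP u\<in>set a. eval \<sigma> u) \<circ> (SUP v\<in>set b. eval \<sigma> v))"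
    unfolding meet_of_joins_def INF_map_product by (intro INF_cong refl SUP_map_product_Dot[OF \<sigma>])
  also have "\<dots> = (INF a\<in>set A. (SUP u\<in>set a. eval \<sigma> u) \<circ> (INF b\<in>set B. SUP v\<in>set b. eval \<sigma> v))"
    using A B by (intro INF_cong refl comp_INF_left[symmetric] time_warp_mono time_warp_SUP_eval[OF
      \<sigma>])
      (auto dest: basic_clausesD)
  also have "\<dots> = meet_of_joins \<sigma> A \<circ> meet_of_joins \<sigma> B"
    unfolding meet_of_joins_def by (rule comp_INF_right[symmetric])
  finally show ?thesis .
qed

lemma join_of_meets_map_Prime:
  assumes \<sigma>: "time_warps \<sigma>" and C: "basic_clauses C"
  shows "join_of_meets \<sigma> (map (map Prime) C) = tw_star (meet_of_joins \<sigma> C)"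
proof -
  have "tw_star (meet_of_joins \<sigma> C) = (SUP c\<in>set C. tw_star (SUP u\<in>set c. eval \<sigma> u))"
    unfolding meet_of_joins_def
    using C by (intro tw_star_INF time_warp_SUP_eval[OF \<sigma>] ballI) (auto dest: basic_clausesD)
  also have "\<dots> = (SUP c\<in>set C. INF u\<in>set c. tw_star (eval \<sigma> u))"
    using C by (intro SUP_cong refl tw_star_SUP time_warp_eval[OF \<sigma>] ballI) (auto dest:
      basic_clausesD)
  finally show ?thesis
    unfolding join_of_meets_def by (simp add: image_image)
qed

lemma meet_of_joins_map_Prime:
  assumes \<sigma>: "time_warps \<sigma>" and D: "basic_clauses D"
  shows "meet_of_joins \<sigma> (map (map Prime) D) = tw_star (join_of_meets \<sigma> D)"
proof -
  have "tw_star (join_of_meets \<sigma> D) = (INF c\<in>set D. tw_star (INF u\<in>set c. eval \<sigma> u))"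
    unfolding join_of_meets_def
    using D by (intro tw_star_SUP time_warp_INF_eval[OF \<sigma>] ballI) (auto dest: basic_clausesD)
  also have "\<dots> = (INF c\<in>set D. SUP u\<in>set c. tw_star (eval \<sigma> u))"
    using D by (intro INF_cong refl tw_star_INF time_warp_eval[OF \<sigma>] ballI) (auto dest:
      basic_clausesD)
  finally show ?thesis
    unfolding meet_of_joins_def by (simp add: image_image)
qed

lemma eval_dnf_cnf:
  assumes \<sigma>: "time_warps \<sigma>"
  shows "eval \<sigma> t = join_of_meets \<sigma> (dnf t) \<and> eval \<sigma> t = meet_of_joins \<sigma> (cnf t)"
proof (induction t)
  case (Var i) then show ?case by (simp add: join_of_meets_def meet_of_joins_def)
next
  case One then show ?case by (simp add: join_of_meets_def meet_of_joins_def)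
next
  case (Meet s t) then show ?case
    by (simp only: eval.simps dnf.simps cnf.simps join_of_meets_map_product_append
      meet_of_joins_append)
      metis
next
  case (Join s t) then show ?case
    by (simp only: eval.simps dnf.simps cnf.simps meet_of_joins_map_product_append
      join_of_meets_append)
      metis
next
  case (Dot s t) then show ?case using basic_clauses_dnf_cnf[of s] basic_clauses_dnf_cnf[of t]
    by (simp only: eval.simps dnf.simps cnf.simps join_of_meets_map_product_Dot[OF \<sigma>]
      meet_of_joins_map_product_Dot[OF \<sigma>]) metis
next
  case (Prime s) then show ?case using basic_clauses_dnf_cnf[of s]
    by (simp only: eval.simps dnf.simps cnf.simps join_of_meets_map_Prime[OF \<sigma>]
      meet_of_joins_map_Prime[OF \<sigma>]) metis
qed

section \<open>Reduction to inequalities \<open>1 \<le> t\<^sub>1 \<or> \<dots> \<or> t\<^sub>n\<close>\<close>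

definition test_terms :: "trm list \<Rightarrow> trm list \<Rightarrow> trm list" where
  "test_terms a c = map_product (\<lambda>u v. Prime (Dot u (Prime v))) a c"

lemma eval_joins: "ts \<noteq> [] \<Longrightarrow> eval \<sigma> (joins ts) = (SUP t\<in>set ts. eval \<sigma> t)"
  by (induction ts rule: joins.induct) (simp_all add: SUP_insert)

lemma INF_le_SUP_iff_id_le_joins_test_terms:
  assumes \<sigma>: "time_warps \<sigma>" and a: "a \<noteq> []" and c: "c \<noteq> []"
  shows "(INF u\<in>set a. eval \<sigma> u) \<le> (SUP v\<in>set c. eval \<sigma> v) \<longleftrightarrow> id \<le> eval \<sigma> (joins (test_terms a c))"
proof -
  let ?f = "INF u\<in>set a. eval \<sigma> u" and ?g = "SUP v\<in>set c. eval \<sigma> v"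
  have f: "time_warp ?f" by (rule time_warp_INF_eval[OF \<sigma> a])
  have uv: "time_warp (eval \<sigma> u \<circ> tw_star (eval \<sigma> v))" for u v
    by (intro time_warp_comp time_warp_tw_star time_warp_eval \<sigma>)
  have "tw_star ?g = (INF v\<in>set c. tw_star (eval \<sigma> v))"
    using c by (intro tw_star_SUP time_warp_eval[OF \<sigma>] ballI) auto
  then have "?f \<circ> tw_star ?g = (INF v\<in>set c. ?f \<circ> tw_star (eval \<sigma> v))"
    using c by (simp only:) (intro comp_INF_left time_warp_mono f, auto)
  also have "\<dots> = (INF v\<in>set c. INF u\<in>set a. eval \<sigma> u \<circ> tw_star (eval \<sigma> v))"
    by (simp only: comp_INF_right)
  finally have "tw_star (?f \<circ> tw_star ?g) =
      tw_star (INF v\<in>set c. INF u\<in>set a. eval \<sigma> u \<circ> tw_star (eval \<sigma> v))"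
    by simp
  also have "\<dots> = (SUP v\<in>set c. tw_star (INF u\<in>set a. eval \<sigma> u \<circ> tw_star (eval \<sigma> v)))"
    using a c by (intro tw_star_INF ballI time_warp_INF uv) auto
  also have "\<dots> = (SUP v\<in>set c. SUP u\<in>set a. tw_star (eval \<sigma> u \<circ> tw_star (eval \<sigma> v)))"
    using a by (intro SUP_cong refl tw_star_INF ballI uv) auto
  also have "\<dots> = (SUP u\<in>set a. SUP v\<in>set c. tw_star (eval \<sigma> u \<circ> tw_star (eval \<sigma> v)))"
    by (rule SUP_commute)
  also have "\<dots> = (SUP x\<in>set (test_terms a c). eval \<sigma> x)"
    unfolding test_terms_def SUP_map_product by simp
  also have "\<dots> = eval \<sigma> (joins (test_terms a c))"
    using a c by (simp add: eval_joins test_terms_def)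
  finally show ?thesis
    using le_iff_id_le_tw_star[OF f time_warp_SUP_eval[OF \<sigma> c]] by simp
qed

lemma W_leq_iff_time_warps: "W_leq s t \<longleftrightarrow> (\<forall>\<sigma>. time_warps \<sigma> \<longrightarrow> eval \<sigma> s \<le> eval \<sigma> t)"
  unfolding W_leq_def time_warps_def le_fun_def by blast

lemma W_leq_iff_test_terms:
  "W_leq s t \<longleftrightarrow> (\<forall>a\<in>set (dnf s). \<forall>c\<in>set (cnf t). W_leq One (joins (test_terms a c)))"
proof -
  have "eval \<sigma> s \<le> eval \<sigma> t \<longleftrightarrow>
      (\<forall>a\<in>set (dnf s). \<forall>c\<in>set (cnf t). id \<le> eval \<sigma> (joins (test_terms a c)))"
    if \<sigma>: "time_warps \<sigma>" for \<sigma>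
  proof -
    have "eval \<sigma> s \<le> eval \<sigma> t \<longleftrightarrow> join_of_meets \<sigma> (dnf s) \<le> meet_of_joins \<sigma> (cnf t)"
      using conjunct1[OF eval_dnf_cnf[OF \<sigma>, of s]] conjunct2[OF eval_dnf_cnf[OF \<sigma>, of t]] by simp
    also have "\<dots> \<longleftrightarrow> (\<forall>a\<in>set (dnf s). \<forall>c\<in>set (cnf t).
        (INF u\<in>set a. eval \<sigma> u) \<le> (SUP v\<in>set c. eval \<sigma> v))"
      unfolding join_of_meets_def meet_of_joins_def by (simp add: SUP_le_iff le_INF_iff) blast
    also have "\<dots> \<longleftrightarrow> (\<forall>a\<in>set (dnf s). \<forall>c\<in>set (cnf t). id \<le> eval \<sigma> (joins (test_terms a c)))"
      using INF_le_SUP_iff_id_le_joins_test_terms[OF \<sigma>]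
        basic_clausesD(2)[OF conjunct1[OF basic_clauses_dnf_cnf[of s]]]
        basic_clausesD(2)[OF conjunct2[OF basic_clauses_dnf_cnf[of t]]]
      by blast
    finally show ?thesis .
  qed
  then show ?thesis unfolding W_leq_iff_time_warps by auto
qed

lemma W_eq_iff_W_leq: "W_eq s t \<longleftrightarrow> W_leq s t \<and> W_leq t s"
  unfolding W_eq_def W_leq_def by (auto intro: antisym simp: le_fun_def fun_eq_iff)

lemma W_eq_Meet_One_iff: "W_eq (Meet One t) One \<longleftrightarrow> W_leq One t"
  unfolding W_eq_def W_leq_def by (simp add: le_iff_inf[symmetric] le_fun_def)

lemma test_terms_basic:
  assumes "a \<noteq> []" "c \<noteq> []" "\<forall>u\<in>set a. basic u" "\<forall>v\<in>set c. basic v"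
  shows "test_terms a c \<noteq> [] \<and> (\<forall>x\<in>set (test_terms a c). basic x)"
  using assms by (auto simp: test_terms_def set_map_product intro!: basic.intros)


section \<open>Recognising codes of terms\<close>

lemma code_inj: "code s = code t \<Longrightarrow> s = t"
proof (induction s arbitrary: t)
  case (Var i) then show ?case by (cases t) auto
next
  case (Meet s1 s2) then show ?case by (cases t) auto
next
  case (Join s1 s2) then show ?case by (cases t) auto
next
  case (Dot s1 s2) then show ?case by (cases t) auto
next
  case (Prime s) then show ?case by (cases t) auto
next
  case One then show ?case by (cases t) auto
qed

lemma code_eq_iff [simp]: "code s = code t \<longleftrightarrow> s = t"
  using code_inj by blast

lemma map_code_inj: "map code xs = map code ys \<Longrightarrow> xs = ys"
  by (metis code_inj inj_map_eq_map inj_onI)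

lemma less_prod_encode: "0 < k \<Longrightarrow> b < prod_encode (k, b)"
  by (cases k) (simp_all add: prod_encode_def)

lemma less_prod_encode_fst: "0 < k \<Longrightarrow> a < prod_encode (k, prod_encode (a, b))"
  using le_prod_encode_1[of a b] less_prod_encode[of k "prod_encode (a, b)"] by linarith

lemma less_prod_encode_snd: "0 < k \<Longrightarrow> b < prod_encode (k, prod_encode (a, b))"
  using le_prod_encode_2[of b a] less_prod_encode[of k "prod_encode (a, b)"] by linarith

lemma prod_encode_tag_cases:
  obtains (t0) i where "n = prod_encode (0, i)"
  | (t1) a b where "n = prod_encode (1, prod_encode (a, b))"
  | (t2) a b where "n = prod_encode (2, prod_encode (a, b))"
  | (t3) a b where "n = prod_encode (3, prod_encode (a, b))"
  | (t4) a where "n = prod_encode (4, a)"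
  | (t5) a where "n = prod_encode (5, a)"
  | (t6) k a where "n = prod_encode (k, a)" "k > 5"
proof -
  obtain k r where n: "n = prod_encode (k, r)" by (metis prod_decode_inverse surj_pair)
  obtain a b where r: "r = prod_encode (a, b)" by (metis prod_decode_inverse surj_pair)
  consider "k = 0" | "k = 1" | "k = 2" | "k = 3" | "k = 4" | "k = 5" | "k > 5" by linarith
  then show ?thesis using that n r by metis
qed

definition tag :: "nat \<Rightarrow> nat" where "tag n = fst (prod_decode n)"
definition arg :: "nat \<Rightarrow> nat" where "arg n = snd (prod_decode n)"
definition left_arg :: "nat \<Rightarrow> nat" where "left_arg n = fst (prod_decode (arg n))"
definition right_arg :: "nat \<Rightarrow> nat" where "right_arg n = snd (prod_decode (arg n))"

lemma tag_prod_encode [simp]: "tag (prod_encode (a, b)) = a"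
  by (simp add: tag_def)

lemma arg_prod_encode [simp]: "arg (prod_encode (a, b)) = b"
  by (simp add: arg_def)

lemma left_arg_prod_encode [simp]: "left_arg (prod_encode (a, prod_encode (b, c))) = b"
  by (simp add: left_arg_def)

lemma right_arg_prod_encode [simp]: "right_arg (prod_encode (a, prod_encode (b, c))) = c"
  by (simp add: right_arg_def)

text \<open>Inside a course-of-values recursion over codes, whose step receives
  \<open>w = (n, history)\<close>, the values already computed at the immediate subcodes of \<open>n\<close>.\<close>

definition left_value :: "nat \<Rightarrow> nat" where
  "left_value w =
      history_value (snd (prod_decode w)) (fst (prod_decode w)) (left_arg (fst (prod_decode w)))"

definition right_value :: "nat \<Rightarrow> nat" where
  "right_value w =
      history_value (snd (prod_decode w)) (fst (prod_decode w)) (right_arg (fst (prod_decode w)))"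

definition arg_value :: "nat \<Rightarrow> nat" where
  "arg_value w =
      history_value (snd (prod_decode w)) (fst (prod_decode w)) (arg (fst (prod_decode w)))"

lemma computable1_tag [computable1_intros]: "computable1 f \<Longrightarrow> computable1 (\<lambda>x. tag (f x))"
  unfolding tag_def by (intro computable1_intros)

lemma computable1_arg [computable1_intros]: "computable1 f \<Longrightarrow> computable1 (\<lambda>x. arg (f x))"
  unfolding arg_def by (intro computable1_intros)

lemma computable1_left_value [computable1_intros]:
  "computable1 f \<Longrightarrow> computable1 (\<lambda>x. left_value (f x))"
  unfolding left_value_def left_arg_def arg_def by (intro computable1_intros)

lemma computable1_right_value [computable1_intros]:
  "computable1 f \<Longrightarrow> computable1 (\<lambda>x. right_value (f x))"
  unfolding right_value_def right_arg_def arg_def by (intro computable1_intros)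

lemma computable1_arg_value [computable1_intros]:
  "computable1 f \<Longrightarrow> computable1 (\<lambda>x. arg_value (f x))"
  unfolding arg_value_def arg_def by (intro computable1_intros)

lemma left_value_cov_history [simp]:
  "0 < k \<Longrightarrow> left_value (prod_encode (prod_encode (k, prod_encode (a, b)),
     list_encode (cov_history G (prod_encode (k, prod_encode (a, b)))))) = cov_rec G a"
  by (simp add: left_value_def history_value_cov_history less_prod_encode_fst)

lemma right_value_cov_history [simp]:
  "0 < k \<Longrightarrow> right_value (prod_encode (prod_encode (k, prod_encode (a, b)),
     list_encode (cov_history G (prod_encode (k, prod_encode (a, b)))))) = cov_rec G b"
  by (simp add: right_value_def history_value_cov_history less_prod_encode_snd)

lemma arg_value_cov_history [simp]:
  "0 < k \<Longrightarrow> arg_value (prod_encode (prod_encode (k, a),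
     list_encode (cov_history G (prod_encode (k, a))))) = cov_rec G a"
  by (simp add: arg_value_def history_value_cov_history less_prod_encode)

definition term_code_step :: "nat \<Rightarrow> nat" where
  "term_code_step w = (let n = fst (prod_decode w) in
     if tag n = 0 then 0
     else if tag n = 1 then left_value w + right_value w
     else if tag n = 2 then left_value w + right_value w
     else if tag n = 3 then left_value w + right_value w
     else if tag n = 4 then arg_value w
     else if tag n = 5 then arg n
     else 1)"

definition term_code_check :: "nat \<Rightarrow> nat" where
  "term_code_check = cov_rec term_code_step"

lemma computable1_term_code_check [computable1_intros]:
  "computable1 f \<Longrightarrow> computable1 (\<lambda>x. term_code_check (f x))"
  unfolding term_code_check_def
  by (rule computable1_comp[OF computable1_cov_rec])
    (unfold term_code_step_def Let_def, intro computable1_intros)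

lemma term_code_check_unfold:
  "term_code_check n = term_code_step (prod_encode (n, list_encode (cov_history term_code_step n)))"
  unfolding term_code_check_def cov_rec_def ..

lemma term_code_check_code [simp]: "term_code_check (code t) = 0"
  by (induction t; subst term_code_check_unfold)
    (simp_all add: term_code_step_def Let_def term_code_check_def[symmetric])

lemma term_code_check_eq_0D: "term_code_check n = 0 \<Longrightarrow> \<exists>t. code t = n"
proof (induction n rule: less_induct)
  case (less n)
  have step: "term_code_step (prod_encode (n, list_encode (cov_history term_code_step n))) = 0"
    using less.prems unfolding term_code_check_unfold .
  have binary: "\<exists>s t. code s = a \<and> code t = b"
    if n: "n = prod_encode (k, prod_encode (a, b))" "k \<in> {1, 2, 3}" for k a b
  proof -
    have "term_code_check a = 0" "term_code_check b = 0"
      using step n by (auto simp: term_code_step_def Let_def term_code_check_def[symmetric])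
    moreover have "a < n" "b < n"
      using n less_prod_encode_fst less_prod_encode_snd by auto
    ultimately show ?thesis using less.IH by blast
  qed
  have unary: "\<exists>s. code s = a" if n: "n = prod_encode (4, a)" for a
  proof -
    have "term_code_check a = 0"
      using step n by (simp add: term_code_step_def Let_def term_code_check_def[symmetric])
    moreover have "a < n" using n less_prod_encode by simp
    ultimately show ?thesis using less.IH by blast
  qed
  show ?case
  proof (cases n rule: prod_encode_tag_cases)
    case (t0 i)
    then have "code (Var i) = n" by simp
    then show ?thesis ..
  next
    case (t1 a b)
    with binary obtain s t where "code (Meet s t) = n" by fastforce
    then show ?thesis ..
  next
    case (t2 a b)
    with binary obtain s t where "code (Join s t) = n" by fastforce
    then show ?thesis ..
  next
    case (t3 a b)
    with binary obtain s t where "code (Dot s t) = n" by fastforce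
    then show ?thesis ..
  next
    case (t4 a)
    with unary obtain s where "code (Prime s) = n" by fastforce
    then show ?thesis ..
  next
    case (t5 a)
    with step have "code One = n" by (simp add: term_code_step_def Let_def)
    then show ?thesis ..
  next
    case (t6 k a)
    with step show ?thesis by (simp add: term_code_step_def Let_def)
  qed
qed

definition basic_code_step :: "nat \<Rightarrow> nat" where
  "basic_code_step w = (let n = fst (prod_decode w) in
     if tag n = 0 then 0
     else if tag n = 3 then left_value w + right_value w
     else if tag n = 4 then arg_value w
     else if tag n = 5 then arg n
     else 1)"

definition basic_code_check :: "nat \<Rightarrow> nat" where
  "basic_code_check = cov_rec basic_code_step"

lemma computable1_basic_code_check [computable1_intros]:
  "computable1 f \<Longrightarrow> computable1 (\<lambda>x. basic_code_check (f x))"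
  unfolding basic_code_check_def
  by (rule computable1_comp[OF computable1_cov_rec])
    (unfold basic_code_step_def Let_def, intro computable1_intros)

lemma basic_code_check_unfold:
  "basic_code_check n =
      basic_code_step (prod_encode (n, list_encode (cov_history basic_code_step n)))"
  unfolding basic_code_check_def cov_rec_def ..

lemma basic_code_check_code: "basic t \<Longrightarrow> basic_code_check (code t) = 0"
  by (induction rule: basic.induct; subst basic_code_check_unfold)
    (simp_all add: basic_code_step_def Let_def basic_code_check_def[symmetric])

lemma basic_code_check_eq_0D: "basic_code_check n = 0 \<Longrightarrow> \<exists>t. basic t \<and> code t = n"
proof (induction n rule: less_induct)
  case (less n)
  have step: "basic_code_step (prod_encode (n, list_encode (cov_history basic_code_step n))) = 0"
    using less.prems unfolding basic_code_check_unfold .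
  show ?case
  proof (cases n rule: prod_encode_tag_cases)
    case (t0 i)
    then have "basic (Var i) \<and> code (Var i) = n" by (simp add: basic.intros)
    then show ?thesis ..
  next
    case (t3 a b)
    have "basic_code_check a = 0" "basic_code_check b = 0"
      using step t3 by (simp_all add: basic_code_step_def Let_def basic_code_check_def[symmetric])
    moreover have "a < n" "b < n"
      using t3 less_prod_encode_fst less_prod_encode_snd by auto
    ultimately obtain s t where "basic s" "code s = a" "basic t" "code t = b"
      using less.IH by blast
    with t3 have "basic (Dot s t) \<and> code (Dot s t) = n" by (simp add: basic.intros)
    then show ?thesis ..
  next
    case (t4 a)
    have "basic_code_check a = 0"
      using step t4 by (simp add: basic_code_step_def Let_def basic_code_check_def[symmetric])
    moreover have "a < n" using t4 less_prod_encode by simp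
    ultimately obtain s where "basic s" "code s = a"
      using less.IH by blast
    with t4 have "basic (Prime s) \<and> code (Prime s) = n" by (simp add: basic.intros)
    then show ?thesis ..
  next
    case (t5 a)
    with step have "basic One \<and> code One = n"
      by (simp add: basic_code_step_def Let_def basic.intros)
    then show ?thesis ..
  qed (use step in \<open>simp_all add: basic_code_step_def Let_def\<close>)
qed

section \<open>Computing the normal forms on codes\<close>

definition terms_code :: "trm list \<Rightarrow> nat" where
  "terms_code a = list_encode (map code a)"

definition clauses_code :: "trm list list \<Rightarrow> nat" where
  "clauses_code L = list_encode (map terms_code L)"

definition singleton_code :: "nat \<Rightarrow> nat" where
  "singleton_code x = list_encode [x]"

definition append_code :: "nat \<Rightarrow> nat \<Rightarrow> nat" where
  "append_code l1 l2 = list_encode (list_decode l1 @ list_decode l2)"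

definition product_append_code :: "nat \<Rightarrow> nat \<Rightarrow> nat" where
  "product_append_code l1 l2 = list_encode (concat (map (\<lambda>a. map (\<lambda>b. append_code a b)
     (list_decode l2)) (list_decode l1)))"

definition product_Dot_code :: "nat \<Rightarrow> nat \<Rightarrow> nat" where
  "product_Dot_code l1 l2 =
      list_encode (concat (map (\<lambda>u. map (\<lambda>v. prod_encode (3, prod_encode (u, v)))
     (list_decode l2)) (list_decode l1)))"

definition product_product_Dot_code :: "nat \<Rightarrow> nat \<Rightarrow> nat" where
  "product_product_Dot_code l1 l2 = list_encode (concat (map (\<lambda>a. map (\<lambda>b. product_Dot_code a b)
     (list_decode l2)) (list_decode l1)))"

definition map_map_Prime_code :: "nat \<Rightarrow> nat" where
  "map_map_Prime_code l = list_encode (map (\<lambda>a. list_encode (map (\<lambda>u. prod_encode (4, u))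
     (list_decode a))) (list_decode l))"

lemma computable1_singleton_code [computable1_intros]:
  "computable1 f \<Longrightarrow> computable1 (\<lambda>x. singleton_code (f x))"
  unfolding singleton_code_def by (simp add: computable1_intros)

lemma computable1_append_code [computable1_intros]:
  "computable1 f \<Longrightarrow> computable1 g \<Longrightarrow> computable1 (\<lambda>x. append_code (f x) (g x))"
  unfolding append_code_def by (intro computable1_intros)

lemma computable1_product_append_code [computable1_intros]:
  assumes f: "computable1 f" and g: "computable1 g"
  shows "computable1 (\<lambda>x. product_append_code (f x) (g x))"
proof -
  have "computable1 (\<lambda>w. append_code (fst (prod_decode (snd (prod_decode w))))
      (snd (prod_decode (snd (prod_decode w)))))"
    by (intro computable1_intros)
  from computable1_comprehension[OF this f g] show ?thesis by (simp add: product_append_code_def)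
qed

lemma computable1_product_Dot_code [computable1_intros]:
  assumes f: "computable1 f" and g: "computable1 g"
  shows "computable1 (\<lambda>x. product_Dot_code (f x) (g x))"
proof -
  have "computable1 (\<lambda>w. prod_encode (3, prod_encode (fst (prod_decode (snd (prod_decode w))),
      snd (prod_decode (snd (prod_decode w))))))"
    by (intro computable1_intros)
  from computable1_comprehension[OF this f g] show ?thesis by (simp add: product_Dot_code_def)
qed

lemma computable1_product_product_Dot_code [computable1_intros]:
  assumes f: "computable1 f" and g: "computable1 g"
  shows "computable1 (\<lambda>x. product_product_Dot_code (f x) (g x))"
proof -
  have "computable1 (\<lambda>w. product_Dot_code (fst (prod_decode (snd (prod_decode w))))
      (snd (prod_decode (snd (prod_decode w)))))"
    by (intro computable1_intros)
  from computable1_comprehension[OF this f g] show ?thesis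
    by (simp add: product_product_Dot_code_def)
qed

lemma computable1_map_map_Prime_code [computable1_intros]:
  assumes f: "computable1 f"
  shows "computable1 (\<lambda>x. map_map_Prime_code (f x))"
proof -
  have "computable1 (\<lambda>w. prod_encode (4, snd (prod_decode w)))" by (intro computable1_intros)
  from computable1_map[OF this computable1_id]
  have "computable1 (\<lambda>x. list_encode (map (\<lambda>u. prod_encode (4, u)) (list_decode x)))" by simp
  from computable1_map[OF computable1_comp[OF this computable1_snd] f] show ?thesis
    by (simp add: map_map_Prime_code_def)
qed

lemma append_code_clauses_code:
  "append_code (clauses_code A) (clauses_code B) = clauses_code (A @ B)"
  by (simp add: append_code_def clauses_code_def)

lemma product_append_code_clauses_code:
  "product_append_code (clauses_code A) (clauses_code B) = clauses_code (map_product (@) A B)"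
  by (simp add: product_append_code_def append_code_def clauses_code_def terms_code_def
    map_product_def
    map_concat comp_def)

lemma product_Dot_code_terms_code:
  "product_Dot_code (terms_code a) (terms_code b) = terms_code (map_product Dot a b)"
  by (simp add: product_Dot_code_def terms_code_def map_product_def map_concat comp_def)

lemma product_product_Dot_code_clauses_code:
  "product_product_Dot_code (clauses_code A) (clauses_code B) =
      clauses_code (map_product (map_product Dot) A B)"
  by (simp add: product_product_Dot_code_def clauses_code_def map_product_def map_concat comp_def
    product_Dot_code_terms_code)

lemma map_map_Prime_code_clauses_code:
  "map_map_Prime_code (clauses_code C) = clauses_code (map (map Prime) C)"
  by (simp add: map_map_Prime_code_def clauses_code_def terms_code_def comp_def)

text \<open>The recursion computes the pair of codes of \<^term>\<open>dnf t\<close> and \<^term>\<open>cnf t\<close>, which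
  have to be computed simultaneously since \<open>\<star>\<close> swaps them.\<close>

definition dnf_cnf_step :: "nat \<Rightarrow> nat" where
  "dnf_cnf_step w = (let n = fst (prod_decode w);
     (dl, cl) = prod_decode (left_value w); (dr, cr) = prod_decode (right_value w);
     (da, ca) = prod_decode (arg_value w) in
     if tag n = 1 then prod_encode (product_append_code dl dr, append_code cl cr)
     else if tag n = 2 then prod_encode (append_code dl dr, product_append_code cl cr)
     else if tag n = 3 then prod_encode (product_product_Dot_code dl dr, product_product_Dot_code cl
       cr)
     else if tag n = 4 then prod_encode (map_map_Prime_code ca, map_map_Prime_code da)
     else prod_encode (singleton_code (singleton_code n), singleton_code (singleton_code n)))"

definition dnf_cnf_code :: "nat \<Rightarrow> nat" where
  "dnf_cnf_code = cov_rec dnf_cnf_step"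

lemma computable1_dnf_cnf_code [computable1_intros]:
  "computable1 f \<Longrightarrow> computable1 (\<lambda>x. dnf_cnf_code (f x))"
  unfolding dnf_cnf_code_def
  by (rule computable1_comp[OF computable1_cov_rec])
    (unfold dnf_cnf_step_def Let_def case_prod_beta, intro computable1_intros)

lemma dnf_cnf_code_unfold:
  "dnf_cnf_code n = dnf_cnf_step (prod_encode (n, list_encode (cov_history dnf_cnf_step n)))"
  unfolding dnf_cnf_code_def cov_rec_def ..

lemma dnf_cnf_code_code:
  "dnf_cnf_code (code t) = prod_encode (clauses_code (dnf t), clauses_code (cnf t))"
  by (induction t; subst dnf_cnf_code_unfold)
    (simp_all add: dnf_cnf_step_def Let_def dnf_cnf_code_def[symmetric] singleton_code_def
      clauses_code_def[symmetric] append_code_clauses_code product_append_code_clauses_code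
      product_product_Dot_code_clauses_code map_map_Prime_code_clauses_code,
     simp_all add: clauses_code_def terms_code_def)

lemma decidable_set_iff_computable1:
  "decidable_set A \<longleftrightarrow> (\<exists>g. computable1 g \<and> (\<forall>x. x \<in> A \<longleftrightarrow> g x = 0))"
proof
  assume "decidable_set A"
  then obtain f where f: "total_rec 1 f" "\<forall>x. x \<in> A \<longleftrightarrow> f [x] = 0"
    unfolding decidable_set_def by blast
  have "computable1 (\<lambda>x. f [x])" unfolding computable1_def
    using total_rec_computable[OF f(1)] by (rule computable_cong) (auto simp: length_Suc_conv)
  then show "\<exists>g. computable1 g \<and> (\<forall>x. x \<in> A \<longleftrightarrow> g x = 0)" using f(2) by blast
next
  assume "\<exists>g. computable1 g \<and> (\<forall>x. x \<in> A \<longleftrightarrow> g x = 0)"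
  then obtain g f where g: "\<forall>x. x \<in> A \<longleftrightarrow> g x = 0"
    and f: "total_rec 1 f" "\<forall>xs. length xs = 1 \<longrightarrow> f xs = g (hd xs)"
    unfolding computable1_def computable_def by blast
  then show "decidable_set A" unfolding decidable_set_def by auto
qed

lemma terms_code_in_basic_join_codes_iff:
  "terms_code ts \<in> basic_join_codes \<longleftrightarrow> ts \<noteq> [] \<and> (\<forall>t\<in>set ts. basic t) \<and> W_leq One (joins ts)"
proof
  assume "terms_code ts \<in> basic_join_codes"
  then obtain ts' where "terms_code ts = list_encode (map code ts')"
    and "ts' \<noteq> [] \<and> (\<forall>t\<in>set ts'. basic t) \<and> W_leq One (joins ts')"
    unfolding basic_join_codes_def by blast
  moreover from this(1) have "ts' = ts"
    unfolding terms_code_def by (metis list_encode_eq map_code_inj)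
  ultimately show "ts \<noteq> [] \<and> (\<forall>t\<in>set ts. basic t) \<and> W_leq One (joins ts)" by blast
qed (auto simp: basic_join_codes_def terms_code_def)

lemma code_pair_in_equational_theory_codes_iff:
  "prod_encode (code s, code t) \<in> equational_theory_codes \<longleftrightarrow> W_eq s t"
  unfolding equational_theory_codes_def by auto

definition test_terms_code :: "nat \<Rightarrow> nat \<Rightarrow> nat" where
  "test_terms_code a c = list_encode (concat (map (\<lambda>u. map (\<lambda>v.
     prod_encode (4, prod_encode (3, prod_encode (u, prod_encode (4, v)))))
     (list_decode c)) (list_decode a)))"

lemma test_terms_code_terms_code:
  "test_terms_code (terms_code a) (terms_code c) = terms_code (test_terms a c)"
  by (simp add: test_terms_code_def terms_code_def test_terms_def map_product_def map_concat
    comp_def)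

lemma computable1_test_terms_code [computable1_intros]:
  assumes f: "computable1 f" and g: "computable1 g"
  shows "computable1 (\<lambda>x. test_terms_code (f x) (g x))"
proof -
  have "computable1 (\<lambda>w. prod_encode (4, prod_encode (3,
      prod_encode (fst (prod_decode (snd (prod_decode w))),
      prod_encode (4, snd (prod_decode (snd (prod_decode w))))))))"
    by (intro computable1_intros)
  from computable1_comprehension[OF this f g] show ?thesis by (simp add: test_terms_code_def)
qed

definition test_codes :: "nat \<Rightarrow> nat \<Rightarrow> nat" where
  "test_codes x y = list_encode (concat (map (\<lambda>a. map (\<lambda>c. test_terms_code a c)
     (list_decode (snd (prod_decode (dnf_cnf_code y)))))
     (list_decode (fst (prod_decode (dnf_cnf_code x))))))"

lemma computable1_test_codes [computable1_intros]:
  assumes f: "computable1 f" and g: "computable1 g"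
  shows "computable1 (\<lambda>x. test_codes (f x) (g x))"
proof -
  have F: "computable1 (\<lambda>w. test_terms_code (fst (prod_decode (snd (prod_decode w))))
      (snd (prod_decode (snd (prod_decode w)))))"
    by (intro computable1_intros)
  have L1: "computable1 (\<lambda>x. fst (prod_decode (dnf_cnf_code (f x))))"
    and L2: "computable1 (\<lambda>x. snd (prod_decode (dnf_cnf_code (g x))))"
    by (intro computable1_intros f g)+
  from computable1_comprehension[OF F L1 L2] show ?thesis
    by (simp add: test_codes_def)
qed

lemma list_decode_test_codes:
  "list_decode (test_codes (code s) (code t)) =
      map_product (\<lambda>a c. terms_code (test_terms a c)) (dnf s) (cnf t)"
  by (simp add: test_codes_def dnf_cnf_code_code clauses_code_def map_product_def map_concat
    comp_def
    test_terms_code_terms_code)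

lemma sum_test_codes_eq_0_iff:
  fixes d :: "nat \<Rightarrow> nat"
  assumes d: "\<forall>q. q \<in> basic_join_codes \<longleftrightarrow> d q = 0"
  shows "sum_list (map d (list_decode (test_codes (code s) (code t)))) = 0 \<longleftrightarrow> W_leq s t"
proof -
  have "d (terms_code (test_terms a c)) = 0 \<longleftrightarrow> W_leq One (joins (test_terms a c))"
    if "a \<in> set (dnf s)" "c \<in> set (cnf t)" for a c
  proof -
    have "test_terms a c \<noteq> [] \<and> (\<forall>x\<in>set (test_terms a c). basic x)"
      using that basic_clauses_dnf_cnf[of s] basic_clauses_dnf_cnf[of t]
      by (intro test_terms_basic) (auto dest: basic_clausesD)
    then show ?thesis using d terms_code_in_basic_join_codes_iff by blast
  qed
  then show ?thesis
    by (simp add: list_decode_test_codes set_map_product W_leq_iff_test_terms[of s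
      t])
qed

definition equation_decider :: "(nat \<Rightarrow> nat) \<Rightarrow> nat \<Rightarrow> nat" where
  "equation_decider d z = (let x = fst (prod_decode z); y = snd (prod_decode z) in
     if term_code_check x + term_code_check y = 0
     then sum_list (map d (list_decode (test_codes x y))) + sum_list (map d (list_decode (test_codes
       y x)))
     else 1)"

lemma computable1_equation_decider:
  assumes d: "computable1 d"
  shows "computable1 (equation_decider d)"
proof -
  have F: "computable1 (\<lambda>w. d (snd (prod_decode w)))"
    by (intro computable1_comp[OF d] computable1_intros)
  have "computable1 (\<lambda>z. sum_list (map d (list_decode
      (test_codes (fst (prod_decode z)) (snd (prod_decode z))))))"
    and "computable1 (\<lambda>z. sum_list (map d (list_decode
      (test_codes (snd (prod_decode z)) (fst (prod_decode z))))))"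
    using computable1_sum_list[OF F computable1_test_codes[OF computable1_fst computable1_snd]]
      computable1_sum_list[OF F computable1_test_codes[OF computable1_snd computable1_fst]]
    by simp_all
  then show ?thesis
    unfolding equation_decider_def[abs_def] Let_def by (intro computable1_intros)
qed

lemma equation_decider_correct:
  fixes d :: "nat \<Rightarrow> nat"
  assumes d: "\<forall>q. q \<in> basic_join_codes \<longleftrightarrow> d q = 0"
  shows "z \<in> equational_theory_codes \<longleftrightarrow> equation_decider d z = 0"
proof (cases "term_code_check (fst (prod_decode z)) + term_code_check (snd (prod_decode z)) = 0")
  case True
  then obtain s t where st: "code s = fst (prod_decode z)" "code t = snd (prod_decode z)"
    using term_code_check_eq_0D by (metis add_is_0)
  then have z: "z = prod_encode (code s, code t)" by (metis prod.collapse prod_decode_inverse)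
  have "equation_decider d z = 0 \<longleftrightarrow> W_leq s t \<and> W_leq t s"
    using sum_test_codes_eq_0_iff[OF d, of s t] sum_test_codes_eq_0_iff[OF d, of t s]
    by (simp add: equation_decider_def Let_def z)
  then show ?thesis
    using z code_pair_in_equational_theory_codes_iff W_eq_iff_W_leq by simp
next
  case False
  then have "z \<notin> equational_theory_codes"
    unfolding equational_theory_codes_def by auto
  then show ?thesis using False by (auto simp: equation_decider_def Let_def)
qed

text \<open>\<^term>\<open>joins\<close> nests to the right, so its code is a left fold over the reversed list.\<close>

definition joins_code :: "nat \<Rightarrow> nat" where
  "joins_code x = (let r = list_encode (rev (list_decode x)) in
     foldl (\<lambda>acc c. prod_encode (2, prod_encode (c, acc))) (hd_code r) (list_decode (tl_code r)))"

lemma computable1_joins_code: "computable1 joins_code"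
proof -
  have b: "computable1 (\<lambda>w. prod_encode (2, snd (prod_decode w)))"
    and a: "computable1 (\<lambda>x. hd_code (list_encode (rev (list_decode x))))"
    and L: "computable1 (\<lambda>x. tl_code (list_encode (rev (list_decode x))))"
    by (intro computable1_intros)+
  from computable1_foldl[OF b a L] show ?thesis
    by (simp add: joins_code_def[abs_def] Let_def)
qed

lemma joins_Cons: "ts \<noteq> [] \<Longrightarrow> joins (t # ts) = Join t (joins ts)"
  by (cases ts) simp_all

lemma foldl_joins_code:
  "foldl (\<lambda>acc c. prod_encode (2, prod_encode (c, acc))) (code t) (rev (map code ts)) =
      code (joins (ts @ [t]))"
  by (induction ts) (simp_all add: joins_Cons)

lemma joins_code_terms_code: "ts \<noteq> [] \<Longrightarrow> joins_code (terms_code ts) = code (joins ts)"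
proof -
  assume "ts \<noteq> []"
  then obtain us t where ts: "ts = us @ [t]" by (metis rev_exhaust)
  have "joins_code (terms_code ts) =
      foldl (\<lambda>acc c. prod_encode (2, prod_encode (c, acc))) (code t) (rev (map code us))"
    by (simp add: joins_code_def terms_code_def ts)
  then show ?thesis by (simp add: foldl_joins_code ts)
qed

definition one_le_joins_code :: "nat \<Rightarrow> nat" where
  "one_le_joins_code x =
      prod_encode (prod_encode (1, prod_encode (code One, joins_code x)), code One)"

lemma one_le_joins_code_terms_code:
  "ts \<noteq> [] \<Longrightarrow> one_le_joins_code (terms_code ts) = prod_encode (code (Meet One (joins ts)), code One)"
  by (simp add: one_le_joins_code_def joins_code_terms_code del: code.simps) simp

definition basic_join_decider :: "(nat \<Rightarrow> nat) \<Rightarrow> nat \<Rightarrow> nat" where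
  "basic_join_decider e x =
     (if x = 0 then 1
      else if sum_list (map basic_code_check (list_decode x)) = 0 then e (one_le_joins_code x)
      else 1)"

lemma computable1_basic_join_decider:
  assumes e: "computable1 e"
  shows "computable1 (basic_join_decider e)"
proof -
  have "computable1 (\<lambda>w. basic_code_check (snd (prod_decode w)))" by (intro computable1_intros)
  note sum = computable1_sum_list[OF this computable1_id]
  have "computable1 (\<lambda>x. e (one_le_joins_code x))"
    unfolding one_le_joins_code_def
    by (intro computable1_comp[OF e] computable1_intros computable1_comp[OF computable1_joins_code])
  with sum show ?thesis
    unfolding basic_join_decider_def by (intro computable1_intros) simp_all
qed

lemma basic_terms_codeE:
  assumes "x \<noteq> 0" and "\<forall>c\<in>set (list_decode x). basic_code_check c = 0"
  obtains ts where "x = terms_code ts" "ts \<noteq> []" "\<forall>t\<in>set ts. basic t"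
proof -
  define ts where "ts = map (\<lambda>c. SOME t. basic t \<and> code t = c) (list_decode x)"
  have "\<forall>c\<in>set (list_decode x).
      basic (SOME t. basic t \<and> code t = c) \<and> code (SOME t. basic t \<and> code t = c) = c"
    using assms(2) basic_code_check_eq_0D by (metis (mono_tags, lifting) someI_ex)
  then have "map code ts = list_decode x" and "\<forall>t\<in>set ts. basic t"
    unfolding ts_def by (auto simp: comp_def intro: map_idI)
  moreover from this(1) have "x = terms_code ts" unfolding terms_code_def
    by (metis list_decode_inverse)
  ultimately show ?thesis using that assms(1) by (auto simp: terms_code_def)
qed

lemma basic_join_decider_correct:
  fixes e :: "nat \<Rightarrow> nat"
  assumes e: "\<forall>q. q \<in> equational_theory_codes \<longleftrightarrow> e q = 0"
  shows "x \<in> basic_join_codes \<longleftrightarrow> basic_join_decider e x = 0"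
proof (cases "x \<noteq> 0 \<and> (\<forall>c\<in>set (list_decode x). basic_code_check c = 0)")
  case True
  then obtain ts where ts: "x = terms_code ts" "ts \<noteq> []" "\<forall>t\<in>set ts. basic t"
    using basic_terms_codeE by blast
  have "basic_join_decider e x = e (prod_encode (code (Meet One (joins ts)), code One))"
    using True ts by (simp add: basic_join_decider_def one_le_joins_code_terms_code del: code.simps)
  then have "basic_join_decider e x = 0 \<longleftrightarrow>
      prod_encode (code (Meet One (joins ts)), code One) \<in> equational_theory_codes"
    by (simp only: e[rule_format])
  also have "\<dots> \<longleftrightarrow> W_eq (Meet One (joins ts)) One"
    by (rule code_pair_in_equational_theory_codes_iff)
  also have "\<dots> \<longleftrightarrow> x \<in> basic_join_codes"
    using ts by (simp add: W_eq_Meet_One_iff terms_code_in_basic_join_codes_iff)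
  finally show ?thesis by simp
next
  case False
  then have "x \<notin> basic_join_codes"
    unfolding basic_join_codes_def by (auto simp: basic_code_check_code)
  then show ?thesis using False by (auto simp: basic_join_decider_def)
qed

theorem proposition3p1:
  shows "decidable_set equational_theory_codes \<longleftrightarrow> decidable_set basic_join_codes"
proof
  assume "decidable_set equational_theory_codes"
  then obtain e where "computable1 e" "\<forall>q. q \<in> equational_theory_codes \<longleftrightarrow> e q = 0"
    unfolding decidable_set_iff_computable1 by blast
  then show "decidable_set basic_join_codes"
    unfolding decidable_set_iff_computable1
    using computable1_basic_join_decider basic_join_decider_correct by blast
next
  assume "decidable_set basic_join_codes"
  then obtain d where "computable1 d" "\<forall>q. q \<in> basic_join_codes \<longleftrightarrow> d q = 0"
    unfolding decidable_set_iff_computable1 by blast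
  then show "decidable_set equational_theory_codes"
    unfolding decidable_set_iff_computable1
    using computable1_equation_decider equation_decider_correct by blast
qed

end
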